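(* Let $\mathcal C$ be an $(n,k)$ linear code over $\mathrm{GF}(q^m)$ (a $k$-dimensional $\mathrm{GF}(q^m)$-subspace of $\mathrm{GF}(q^m)^n$) and $\mathcal C^\perp$ its dual. Let $W^{\mathrm R}_{\mathcal C}(x,y)=\sum_{i=0}^n A_i y^i x^{n-i}$ and $W^{\mathrm R}_{\mathcal C^\perp}(x,y)=\sum_{j=0}^n B_j y^j x^{n-j}$ be their rank weight enumerators. Then $$W^{\mathrm R}_{\mathcal C^\perp}(x,y)=\frac{1}{|\mathcal C|}\,\bar W^{\mathrm R}_{\mathcal C}\big(x+(q^m-1)y,\;x-y\big),$$ where $\bar W^{\mathrm R}_{\mathcal C}$ is the $q$-transform of $W^{\mathrm R}_{\mathcal C}$; equivalently, $$\sum_{j=0}^n B_j y^j x^{n-j}=q^{-mk}\sum_{i=0}^n A_i\,(x-y)^{[i]} * \big[x+(q^m-1)y\big]^{[n-i]}.$$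
   Context: The rank $\mathrm{rk}(\mathbf v)$ of $\mathbf v\in\mathrm{GF}(q^m)^n$ is the maximum number of its coordinates linearly independent over $\mathrm{GF}(q)$. The rank weight enumerator of a code $\mathcal C\subseteq\mathrm{GF}(q^m)^n$ is $W^{\mathrm R}_{\mathcal C}(x,y)=\sum_{\mathbf v\in\mathcal C} y^{\mathrm{rk}(\mathbf v)}x^{n-\mathrm{rk}(\mathbf v)}$. The dual $\mathcal C^\perp$ is taken with respect to the standard inner product $\mathbf u\cdot\mathbf v=\sum_i u_iv_i$ on $\mathrm{GF}(q^m)^n$. $q$-product: consider homogeneous polynomials $a(x,y;m)=\sum_{i=0}^r a_i(m)y^ix^{r-i}$ and $b(x,y;m)=\sum_{j=0}^s b_j(m)y^jx^{s-j}$ whose coefficients are real functions of the parameter $m$ (coefficients with indices out of range are zero). Their $q$-product is the degree-$(r+s)$ homogeneous polynomial $a*b=\sum_{u=0}^{r+s}c_u(m)y^ux^{r+s-u}$ with $c_u(m)=\sum_{i=0}^u q^{is}a_i(m)b_{u-i}(m-i)$. The $q$-powers are $a^{[0]}=1$, $a^{[n]}=a^{[n-1]}*a$. Here $x+(q^m-1)y$ has coefficients $1$ and $q^m-1$ (the latter depending on $m$), and $x-y$ has constant coefficients $1,-1$. The $q$-transform of $a(x,y;m)=\sum_{i=0}^r a_i(m)y^ix^{r-i}$ is $\bar a(x,y;m)=\sum_{i=0}^r a_i(m)\,y^{[i]}*x^{[r-i]}$, and $\bar W(X,Y)$ means this expression with $x$ replaced by $X$ and $y$ by $Y$ (so $\bar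 W^{\mathrm R}_{\mathcal C}(x+(q^m-1)y,x-y)=\sum_i A_i (x-y)^{[i]}*[x+(q^m-1)y]^{[n-i]}$). *)

theory Defs
  imports Complex_Main
begin

definition is_subfield :: "'a::field set \<Rightarrow> bool" where
  "is_subfield K \<longleftrightarrow> 0 \<in> K \<and> 1 \<in> K \<and>
     (\<forall>a\<in>K. \<forall>b\<in>K. a + b \<in> K \<and> a * b \<in> K) \<and>
     (\<forall>a\<in>K. - a \<in> K) \<and> (\<forall>a\<in>K. a \<noteq> 0 \<longrightarrow> inverse a \<in> K)"

(* vectors of GF(q^m)^n are functions nat => 'a vanishing outside {..<n} *)
definition vecs :: "nat \<Rightarrow> (nat \<Rightarrow> 'a::zero) set" where
  "vecs n = {v. \<forall>i\<ge>n. v i = 0}"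

definition lin_indep_over :: "'a::field set \<Rightarrow> ('b \<Rightarrow> 'a) \<Rightarrow> 'b set \<Rightarrow> bool" where
  "lin_indep_over S f I \<longleftrightarrow>
     (\<forall>c. (\<forall>i\<in>I. c i \<in> S) \<and> (\<Sum>i\<in>I. c i * f i) = 0 \<longrightarrow> (\<forall>i\<in>I. c i = 0))"

definition rk :: "'a::field set \<Rightarrow> nat \<Rightarrow> (nat \<Rightarrow> 'a) \<Rightarrow> nat" where
  "rk K n v = Max {card I | I. I \<subseteq> {..<n} \<and> lin_indep_over K v I}"

definition vadd :: "(nat \<Rightarrow> 'a::field) \<Rightarrow> (nat \<Rightarrow> 'a) \<Rightarrow> nat \<Rightarrow> 'a" where
  "vadd u v = (\<lambda>i. u i + v i)"

definition vscale :: "'a::field \<Rightarrow> (nat \<Rightarrow> 'a) \<Rightarrow> nat \<Rightarrow> 'a" where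
  "vscale c v = (\<lambda>i. c * v i)"

definition vlincomb :: "(nat \<Rightarrow> 'a::field) \<Rightarrow> (nat \<Rightarrow> nat \<Rightarrow> 'a) \<Rightarrow> nat \<Rightarrow> nat \<Rightarrow> 'a" where
  "vlincomb c b k = (\<lambda>i. \<Sum>j<k. c j * b j i)"

definition linear_code :: "nat \<Rightarrow> nat \<Rightarrow> (nat \<Rightarrow> 'a::field) set \<Rightarrow> bool" where
  "linear_code n k C \<longleftrightarrow> C \<subseteq> vecs n \<and>
     (\<exists>b. (\<forall>j<k. b j \<in> vecs n) \<and>
          (\<forall>c. vlincomb c b k = (\<lambda>_. 0) \<longrightarrow> (\<forall>j<k. c j = 0)) \<and>
          C = {vlincomb c b k | c. True})"

definition dual_code :: "nat \<Rightarrow> (nat \<Rightarrow> 'a::field) set \<Rightarrow> (nat \<Rightarrow> 'a) set" where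
  "dual_code n C = {v \<in> vecs n. \<forall>u\<in>C. (\<Sum>i<n. u i * v i) = 0}"

definition rank_dist :: "'a::field set \<Rightarrow> nat \<Rightarrow> (nat \<Rightarrow> 'a) set \<Rightarrow> nat \<Rightarrow> nat" where
  "rank_dist K n C i = card {v \<in> C. rk K n v = i}"

(* (r, a): degree r, coefficients a i m of y^i x^(r-i), as real functions of the real parameter m *)
type_synonym hpoly = "nat \<times> (nat \<Rightarrow> real \<Rightarrow> real)"

definition hcoeff :: "hpoly \<Rightarrow> nat \<Rightarrow> real \<Rightarrow> real" where
  "hcoeff p i m = (if i \<le> fst p then snd p i m else 0)"

definition heval :: "hpoly \<Rightarrow> real \<Rightarrow> real \<Rightarrow> real \<Rightarrow> real" where
  "heval p m x y = (\<Sum>u\<le>fst p. hcoeff p u m * y ^ u * x ^ (fst p - u))"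

definition qprod :: "nat \<Rightarrow> hpoly \<Rightarrow> hpoly \<Rightarrow> hpoly" where
  "qprod q a b = (fst a + fst b,
     \<lambda>u m. \<Sum>i\<le>u. real q ^ (i * fst b) * hcoeff a i m * hcoeff b (u - i) (m - real i))"

definition hone :: hpoly where "hone = (0, \<lambda>i m. 1)"

fun qpow :: "nat \<Rightarrow> hpoly \<Rightarrow> nat \<Rightarrow> hpoly" where
  "qpow q a 0 = hone"
| "qpow q a (Suc n) = qprod q (qpow q a n) a"

definition x_minus_y :: hpoly where
  "x_minus_y = (1, \<lambda>i m. if i = 0 then 1 else -1)"

definition x_plus_qm1_y :: "nat \<Rightarrow> hpoly" where
  "x_plus_qm1_y q = (1, \<lambda>i m. if i = 0 then 1 else real q powr m - 1)"

(* \<bar>W\<bar>(X,Y) for W = \<Sum>_{i\<le>n} A_i y^i x^(n-i): \<Sum> A_i Y^[i] * X^[n-i] *)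
definition qtransform_at :: "nat \<Rightarrow> nat \<Rightarrow> (nat \<Rightarrow> real) \<Rightarrow> hpoly \<Rightarrow> hpoly \<Rightarrow> hpoly" where
  "qtransform_at q n A X Y =
     (n, \<lambda>u m. \<Sum>i\<le>n. A i * hcoeff (qprod q (qpow q Y i) (qpow q X (n - i))) u m)"

end

theory Submission
  imports Defs "HOL-Library.FuncSet" "HOL-Library.Function_Algebras"
begin

text \<open>
  Let K = GF(q) and F = GF(q^m). For a t-dimensional subspace W of K^n, its F-span in F^n has
  q^(tm) elements and the same F-orthogonal complement as W. Double counting orthogonal pairs
  between C and this F-span gives
  |C| #{v in dual C. v orthogonal to the K-complement of W} = q^(tm) #{c in C. c orthogonal to W}.
  A vector v of rank r is orthogonal to W iff W lies in the K-kernel of w |-> w.v, which has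
  dimension n - r. So summing over all W turns both sides into Gaussian moments
  sum_i A_i [n-i, t]_q and sum_j B_j [n-j, n-t]_q of the two rank distributions.
  On the polynomial side, the functional a |-> sum_j [r-j, s]_q a_j turns q-multiplication by x - y
  and by x + (q^m - 1) y into shifts in s. This gives the same moments of the q-transform in
  closed form. Because the matrix ([n-j, s]_q) is unitriangular, the moments determine B.
\<close>

section \<open>Gaussian binomial coefficients\<close>

(* The number of ordered s-tuples of linearly independent vectors in GF(q)^d. *)
definition gauss_prod :: "nat \<Rightarrow> nat \<Rightarrow> nat \<Rightarrow> real" where
  "gauss_prod q d s = (\<Prod>k<s. real q ^ d - real q ^ k)"

definition gauss_binom :: "nat \<Rightarrow> nat \<Rightarrow> nat \<Rightarrow> real" where
  "gauss_binom q d s = gauss_prod q d s / gauss_prod q s s"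

lemma gauss_prod_Suc: "gauss_prod q d (Suc s) = gauss_prod q d s * (real q ^ d - real q ^ s)"
  by (simp add: gauss_prod_def)

lemma gauss_prod_Suc_Suc:
  "gauss_prod q (Suc d) (Suc s) = (real q ^ Suc d - 1) * real q ^ s * gauss_prod q d s"
proof -
  have "gauss_prod q (Suc d) (Suc s) =
      (real q ^ Suc d - 1) * (\<Prod>k<s. real q * (real q ^ d - real q ^ k))"
    unfolding gauss_prod_def prod.lessThan_Suc_shift by (simp add: algebra_simps)
  also have "(\<Prod>k<s. real q * (real q ^ d - real q ^ k)) = real q ^ s * gauss_prod q d s"
    by (simp add: gauss_prod_def prod.distrib)
  finally show ?thesis by simp
qed

lemma gauss_prod_eq_0: "d < s \<Longrightarrow> gauss_prod q d s = 0"
  unfolding gauss_prod_def by (rule prod_zero) auto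

lemma gauss_prod_nonzero:
  assumes "q \<ge> 2" "s \<le> d"
  shows "gauss_prod q d s \<noteq> 0"
proof -
  have "real q ^ k < real q ^ d" if "k < s" for k
    using assms that by (intro power_strict_increasing) auto
  then have "real q ^ d - real q ^ k \<noteq> 0" if "k < s" for k
    using that by (metis less_irrefl right_minus_eq)
  then show ?thesis unfolding gauss_prod_def by simp
qed

lemma gauss_binom_0 [simp]: "gauss_binom q d 0 = 1"
  by (simp add: gauss_binom_def gauss_prod_def)

lemma gauss_binom_eq_0: "d < s \<Longrightarrow> gauss_binom q d s = 0"
  by (simp add: gauss_binom_def gauss_prod_eq_0)

lemma gauss_binom_self: "q \<ge> 2 \<Longrightarrow> gauss_binom q d d = 1"
  using gauss_prod_nonzero[of q d d] by (simp add: gauss_binom_def)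

lemma gauss_binom_Suc_Suc_eq:
  assumes "q \<ge> 2"
  shows "gauss_binom q (Suc d) (Suc s) = (real q ^ Suc d - 1) / (real q ^ Suc s - 1) * gauss_binom q d s"
  using gauss_prod_nonzero[OF assms order_refl, of s] assms
  by (simp add: gauss_binom_def gauss_prod_Suc_Suc)

lemma gauss_binom_Suc_right:
  assumes "q \<ge> 2"
  shows "gauss_binom q d (Suc s) =
    (real q ^ d - real q ^ s) / (real q ^ s * (real q ^ Suc s - 1)) * gauss_binom q d s"
proof -
  have "real q ^ Suc s - 1 > 0"
    using assms by (simp add: one_less_power del: power_Suc)
  then show ?thesis
    using gauss_prod_nonzero[OF assms order_refl, of s] assms
    unfolding gauss_binom_def gauss_prod_Suc[of q d s] gauss_prod_Suc_Suc[of q s s]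
    by (simp add: field_simps)
qed

lemma gauss_binom_pascal:
  assumes "q \<ge> 2"
  shows "gauss_binom q (Suc d) (Suc s) = real q ^ Suc s * gauss_binom q d (Suc s) + gauss_binom q d s"
proof -
  have "real q ^ Suc s - 1 > 0"
    using assms by (simp add: one_less_power del: power_Suc)
  then show ?thesis
    unfolding gauss_binom_Suc_Suc_eq[OF assms] gauss_binom_Suc_right[OF assms, of d s] using assms
    by (simp add: field_simps)
qed

lemma gauss_binom_pascal':
  assumes "q \<ge> 2"
  shows "gauss_binom q (Suc d) (Suc s) = gauss_binom q d (Suc s) + real q ^ (d - s) * gauss_binom q d s"
proof (cases "s \<le> d")
  case True
  have "real q ^ Suc s - 1 > 0"
    using assms by (simp add: one_less_power del: power_Suc)
  moreover have "real q ^ d = real q ^ (d - s) * real q ^ s"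
    using True by (simp flip: power_add)
  ultimately show ?thesis
    unfolding gauss_binom_Suc_Suc_eq[OF assms] gauss_binom_Suc_right[OF assms, of d s] using assms
    by (simp add: field_simps)
next
  case False
  then show ?thesis by (simp add: gauss_binom_eq_0)
qed

lemma gauss_binom_moments_unique:
  fixes X Y :: "nat \<Rightarrow> real"
  assumes q: "q \<ge> 2"
    and moments: "\<And>s. s \<le> n \<Longrightarrow>
      (\<Sum>j\<le>n. gauss_binom q (n - j) s * X j) = (\<Sum>j\<le>n. gauss_binom q (n - j) s * Y j)"
  shows "j \<le> n \<Longrightarrow> X j = Y j"
proof (induct j rule: less_induct)
  case (less j)
  have "(\<Sum>i\<le>n. gauss_binom q (n - i) (n - j) * (X i - Y i)) = (\<Sum>i\<le>n. if i = j then X j - Y j else 0)"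
  proof (intro sum.cong refl)
    fix i assume "i \<in> {..n}"
    consider "i < j" | "i = j" | "i > j" by linarith
    then show "gauss_binom q (n - i) (n - j) * (X i - Y i) = (if i = j then X j - Y j else 0)"
    proof cases
      case 3
      then have "n - i < n - j" using \<open>i \<in> {..n}\<close> less.prems by simp
      then show ?thesis using 3 by (simp add: gauss_binom_eq_0)
    qed (use less gauss_binom_self[OF q] in simp_all)
  qed
  also have "\<dots> = X j - Y j" using less.prems by simp
  finally show ?case
    using moments[of "n - j"] by (simp add: right_diff_distrib sum_subtractf)
qed

section \<open>Gaussian moments of q-products\<close>

lemma hcoeff_eq_0: "fst a < i \<Longrightarrow> hcoeff a i m = 0"
  by (simp add: hcoeff_def)

lemma fst_qprod [simp]: "fst (qprod q a b) = fst a + fst b"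
  by (simp add: qprod_def)

lemma fst_hone [simp]: "fst hone = 0"
  by (simp add: hone_def)

lemma fst_qpow [simp]: "fst (qpow q a i) = i * fst a"
  by (induct i) auto

lemma hcoeff_hone: "hcoeff hone i m = (if i = 0 then 1 else 0)"
  by (simp add: hcoeff_def hone_def)

lemma fst_x_minus_y [simp]: "fst x_minus_y = 1"
  and hcoeff_x_minus_y [simp]: "hcoeff x_minus_y 0 m = 1" "hcoeff x_minus_y (Suc 0) m = -1"
  by (simp_all add: hcoeff_def x_minus_y_def)

lemma fst_x_plus_qm1_y [simp]: "fst (x_plus_qm1_y q) = 1"
  and hcoeff_x_plus_qm1_y [simp]:
    "hcoeff (x_plus_qm1_y q) 0 m = 1" "hcoeff (x_plus_qm1_y q) (Suc 0) m = real q powr m - 1"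
  by (simp_all add: hcoeff_def x_plus_qm1_y_def)

lemma hcoeff_qprod: "hcoeff (qprod q a b) u m =
   (\<Sum>i\<le>u. real q ^ (i * fst b) * hcoeff a i m * hcoeff b (u - i) (m - real i))"
proof (cases "u \<le> fst a + fst b")
  case True
  then show ?thesis unfolding qprod_def by (subst hcoeff_def) simp
next
  case False
  then have vanish: "hcoeff a i m * hcoeff b (u - i) (m' :: real) = 0" for i m'
    by (cases "i \<le> fst a") (simp_all add: hcoeff_eq_0)
  have "(\<Sum>i\<le>u. real q ^ (i * fst b) * hcoeff a i m * hcoeff b (u - i) (m - real i)) = 0"
    by (rule sum.neutral) (metis mult.assoc mult_zero_right vanish)
  then show ?thesis using False by (simp add: hcoeff_eq_0)
qed

lemma hcoeff_qprod_hone: "hcoeff (qprod q a hone) u m = hcoeff a u m"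
proof -
  have "(\<Sum>j\<le>u. hcoeff a j m * hcoeff hone (u - j) (m - real j)) =
      (\<Sum>j\<in>{u}. hcoeff a j m * hcoeff hone (u - j) (m - real j))"
    by (rule sum.mono_neutral_right) (auto simp: hcoeff_hone)
  then show ?thesis by (simp add: hcoeff_qprod hcoeff_hone)
qed

lemma hcoeff_qprod_assoc:
  "hcoeff (qprod q (qprod q a b) c) u m = hcoeff (qprod q a (qprod q b c)) u m"
proof -
  define F where "F = (\<lambda>i l. real q ^ ((i + l) * fst c) * real q ^ (i * fst b) * hcoeff a i m *
      hcoeff b l (m - real i) * hcoeff c (u - (i + l)) (m - real i - real l))"
  have "hcoeff (qprod q (qprod q a b) c) u m = (\<Sum>k\<le>u. \<Sum>i\<le>k. F i (k - i))"
    unfolding hcoeff_qprod F_def by (simp add: sum_distrib_left sum_distrib_right algebra_simps)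
  also have "\<dots> = (\<Sum>(i, l)\<in>{(i, l). i + l \<le> u}. F i l)"
    by (rule sum.triangle_reindex_eq[symmetric])
  also have "{(i, l). i + l \<le> u} = (SIGMA i:{..u}. {..u - i})"
    by auto
  also have "(\<Sum>(i, l)\<in>(SIGMA i:{..u}. {..u - i}). F i l) = (\<Sum>i\<le>u. \<Sum>l\<le>u - i. F i l)"
    by (simp add: sum.Sigma)
  also have "\<dots> = hcoeff (qprod q a (qprod q b c)) u m"
    unfolding hcoeff_qprod F_def
    by (auto simp: sum_distrib_left sum_distrib_right algebra_simps power_add power_mult
        intro!: sum.cong)
  finally show ?thesis .
qed

lemma hcoeff_qprod_linear:
  assumes "fst b = 1" "\<And>m'. hcoeff b 0 m' = 1"
  shows "hcoeff (qprod q a b) u m = real q ^ u * hcoeff a u m +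
     (if u = 0 then 0 else real q ^ (u - 1) * hcoeff a (u - 1) m * hcoeff b 1 (m - real (u - 1)))"
proof (cases u)
  case 0
  then show ?thesis by (simp add: hcoeff_qprod assms)
next
  case (Suc v)
  have "{..u} = insert u (insert v {..<v})" using Suc by auto
  moreover have "hcoeff b (u - i) m' = 0" if "i < v" for i m'
    using that Suc assms(1) by (simp add: hcoeff_eq_0)
  ultimately show ?thesis using Suc by (simp add: hcoeff_qprod assms)
qed

(* By the two q-Pascal rules, q-multiplication by x - y and by x + (q^m - 1) y acts on these
   moments as a shift in s. *)
definition gauss_moment :: "nat \<Rightarrow> nat \<Rightarrow> hpoly \<Rightarrow> real \<Rightarrow> real" where
  "gauss_moment q s a m = (\<Sum>j\<le>fst a. gauss_binom q (fst a - j) s * hcoeff a j m)"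

lemma gauss_moment_qprod_linear:
  assumes "fst b = 1" "\<And>m'. hcoeff b 0 m' = 1"
  shows "gauss_moment q s (qprod q a b) m = (\<Sum>u\<le>fst a. hcoeff a u m * real q ^ u *
      (gauss_binom q (Suc (fst a) - u) s + gauss_binom q (fst a - u) s * hcoeff b 1 (m - real u)))"
proof -
  define r where "r = fst a"
  have "gauss_moment q s (qprod q a b) m =
      (\<Sum>u\<le>Suc r. gauss_binom q (Suc r - u) s * (real q ^ u * hcoeff a u m))
    + (\<Sum>u\<le>Suc r. gauss_binom q (Suc r - u) s * (if u = 0 then 0 else
         real q ^ (u - 1) * hcoeff a (u - 1) m * hcoeff b 1 (m - real (u - 1))))"
    unfolding gauss_moment_def hcoeff_qprod_linear[OF assms] using assms
    by (simp add: r_def algebra_simps sum.distrib)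
  also have "(\<Sum>u\<le>Suc r. gauss_binom q (Suc r - u) s * (real q ^ u * hcoeff a u m)) =
      (\<Sum>u\<le>r. gauss_binom q (Suc r - u) s * (real q ^ u * hcoeff a u m))"
    by (simp add: hcoeff_eq_0 r_def)
  also have "(\<Sum>u\<le>Suc r. gauss_binom q (Suc r - u) s * (if u = 0 then 0 else
         real q ^ (u - 1) * hcoeff a (u - 1) m * hcoeff b 1 (m - real (u - 1))))
      = (\<Sum>u\<le>r. gauss_binom q (r - u) s * (real q ^ u * hcoeff a u m * hcoeff b 1 (m - real u)))"
    by (subst sum.atMost_Suc_shift) simp
  finally show ?thesis unfolding r_def[symmetric]
    by (simp add: sum.distrib[symmetric] algebra_simps)
qed

lemma power_mult_gauss_binom:
  assumes "q \<ge> 2" "u \<le> r"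
  shows "real q ^ u * (real q ^ (r - u - s) * gauss_binom q (r - u) s) =
    real q ^ (r - s) * gauss_binom q (r - u) s"
proof (cases "s \<le> r - u")
  case True
  then have "u + (r - u - s) = r - s" using assms(2) by presburger
  then show ?thesis by (metis mult.assoc power_add)
next
  case False
  then show ?thesis by (simp add: gauss_binom_eq_0)
qed

lemma power_mult_powr_diff: "q \<ge> 2 \<Longrightarrow> real q ^ u * real q powr (m - real u) = real q powr m"
  by (simp add: powr_diff powr_realpow)

lemma gauss_moment_qprod_x_minus_y_0: "gauss_moment q 0 (qprod q a x_minus_y) m = 0"
  by (subst gauss_moment_qprod_linear) (auto intro!: sum.neutral)

lemma gauss_moment_qprod_x_minus_y_Suc:
  assumes "q \<ge> 2"
  shows "gauss_moment q (Suc s) (qprod q a x_minus_y) m =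
    real q ^ (fst a - s) * gauss_moment q s a m"
proof -
  have "gauss_moment q (Suc s) (qprod q a x_minus_y) m =
      (\<Sum>u\<le>fst a. hcoeff a u m * (real q ^ u *
         (real q ^ (fst a - u - s) * gauss_binom q (fst a - u) s)))"
    by (subst gauss_moment_qprod_linear)
      (auto intro!: sum.cong simp: Suc_diff_le gauss_binom_pascal'[OF assms] algebra_simps)
  also have "\<dots> = (\<Sum>u\<le>fst a. hcoeff a u m * (real q ^ (fst a - s) * gauss_binom q (fst a - u) s))"
    by (intro sum.cong refl) (simp only: power_mult_gauss_binom[OF assms] atMost_iff)
  also have "\<dots> = real q ^ (fst a - s) * gauss_moment q s a m"
    unfolding gauss_moment_def by (simp add: sum_distrib_left algebra_simps)
  finally show ?thesis .
qed

lemma gauss_moment_qprod_x_plus_qm1_y_0: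
  assumes "q \<ge> 2"
  shows "gauss_moment q 0 (qprod q a (x_plus_qm1_y q)) m = real q powr m * gauss_moment q 0 a m"
proof -
  have "gauss_moment q 0 (qprod q a (x_plus_qm1_y q)) m =
      (\<Sum>u\<le>fst a. hcoeff a u m * (real q ^ u * real q powr (m - real u)))"
    by (subst gauss_moment_qprod_linear) (auto intro!: sum.cong simp: algebra_simps)
  also have "\<dots> = real q powr m * gauss_moment q 0 a m"
    unfolding gauss_moment_def power_mult_powr_diff[OF assms] by (simp add: sum_distrib_left algebra_simps)
  finally show ?thesis .
qed

lemma gauss_moment_qprod_x_plus_qm1_y_Suc:
  assumes "q \<ge> 2"
  shows "gauss_moment q (Suc s) (qprod q a (x_plus_qm1_y q)) m =
     real q ^ (fst a - s) * gauss_moment q s a m + real q powr m * gauss_moment q (Suc s) a m"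
proof -
  have "gauss_moment q (Suc s) (qprod q a (x_plus_qm1_y q)) m =
    (\<Sum>u\<le>fst a. hcoeff a u m * (real q ^ u * (real q ^ (fst a - u - s) * gauss_binom q (fst a - u) s))
       + hcoeff a u m * (real q ^ u * real q powr (m - real u)) * gauss_binom q (fst a - u) (Suc s))"
    by (subst gauss_moment_qprod_linear)
      (auto intro!: sum.cong simp: Suc_diff_le gauss_binom_pascal'[OF assms] algebra_simps)
  also have "\<dots> = (\<Sum>u\<le>fst a. hcoeff a u m * (real q ^ (fst a - s) * gauss_binom q (fst a - u) s)
       + hcoeff a u m * real q powr m * gauss_binom q (fst a - u) (Suc s))"
    by (intro sum.cong refl)
      (simp only: power_mult_gauss_binom[OF assms] power_mult_powr_diff[OF assms] atMost_iff)
  also have "\<dots> = real q ^ (fst a - s) * gauss_moment q s a m + real q powr m * gauss_moment q (Suc s) a m"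
    unfolding gauss_moment_def by (simp add: sum.distrib sum_distrib_left algebra_simps)
  finally show ?thesis .
qed

lemma gauss_moment_qpow_x_minus_y:
  assumes "q \<ge> 2"
  shows "gauss_moment q s (qpow q x_minus_y i) m = (if s = i then 1 else 0)"
proof (induct i arbitrary: s)
  case 0
  then show ?case by (simp add: gauss_moment_def hcoeff_def hone_def gauss_binom_eq_0)
next
  case (Suc i)
  then show ?case
    by (cases s) (simp_all add: gauss_moment_qprod_x_minus_y_0 gauss_moment_qprod_x_minus_y_Suc[OF assms])
qed

definition qtransform_term :: "nat \<Rightarrow> nat \<Rightarrow> nat \<Rightarrow> hpoly" where
  "qtransform_term q i k = qprod q (qpow q x_minus_y i) (qpow q (x_plus_qm1_y q) k)"

lemma fst_qtransform_term [simp]: "fst (qtransform_term q i k) = i + k"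
  by (simp add: qtransform_term_def)

lemma gauss_moment_qtransform_term_0:
  "gauss_moment q s (qtransform_term q i 0) m = gauss_moment q s (qpow q x_minus_y i) m"
  by (simp add: gauss_moment_def qtransform_term_def hcoeff_qprod_hone)

lemma gauss_moment_qtransform_term_Suc:
  "gauss_moment q s (qtransform_term q i (Suc k)) m =
    gauss_moment q s (qprod q (qtransform_term q i k) (x_plus_qm1_y q)) m"
  unfolding gauss_moment_def qtransform_term_def qpow.simps hcoeff_qprod_assoc by simp

lemma gauss_moment_qtransform_term:
  assumes "q \<ge> 2"
  shows "gauss_moment q s (qtransform_term q i k) m =
    (if s \<le> i + k then (real q powr m) ^ (i + k - s) * gauss_binom q k (i + k - s) else 0)"
proof (induct k arbitrary: s)
  case 0
  show ?case
    by (simp add: gauss_moment_qtransform_term_0 gauss_moment_qpow_x_minus_y[OF assms] gauss_binom_eq_0)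
next
  case (Suc k)
  show ?case
  proof (cases s)
    case 0
    have "gauss_binom q (Suc k) (Suc (i + k)) = gauss_binom q k (i + k)"
      using gauss_binom_pascal[OF assms, of k "i + k"] by (simp add: gauss_binom_eq_0)
    then show ?thesis
      using 0 Suc.hyps[of 0]
      by (simp add: gauss_moment_qtransform_term_Suc gauss_moment_qprod_x_plus_qm1_y_0[OF assms])
  next
    case (Suc s')
    have step: "gauss_moment q (Suc s') (qtransform_term q i (Suc k)) m =
        real q ^ (i + k - s') * gauss_moment q s' (qtransform_term q i k) m
      + real q powr m * gauss_moment q (Suc s') (qtransform_term q i k) m"
      by (simp add: gauss_moment_qtransform_term_Suc gauss_moment_qprod_x_plus_qm1_y_Suc[OF assms])
    consider "s' < i + k" | "s' = i + k" | "s' > i + k" by linarith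
    then show ?thesis
    proof cases
      case 1
      then obtain j where j: "i + k - s' = Suc j" by (metis Suc_diff_Suc)
      then have "i + k - Suc s' = j" by simp
      with 1 j show ?thesis
        unfolding \<open>s = Suc s'\<close> step Suc.hyps by (simp add: gauss_binom_pascal[OF assms] algebra_simps)
    qed (unfold \<open>s = Suc s'\<close> step Suc.hyps, simp_all)
  qed
qed

lemma hcoeff_qtransform_at:
  "hcoeff (qtransform_at q n A (x_plus_qm1_y q) x_minus_y) j m =
    (\<Sum>i\<le>n. A i * hcoeff (qtransform_term q i (n - i)) j m)"
proof (cases "j \<le> n")
  case False
  then show ?thesis by (simp add: hcoeff_eq_0 qtransform_at_def)
qed (simp add: hcoeff_def[of "(n, _)"] qtransform_at_def qtransform_term_def)

lemma gauss_moment_qtransform_at: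
  assumes "q \<ge> 2" "s \<le> n"
  shows "gauss_moment q s (qtransform_at q n A (x_plus_qm1_y q) x_minus_y) m =
    (real q powr m) ^ (n - s) * (\<Sum>i\<le>n. A i * gauss_binom q (n - i) (n - s))"
proof -
  have "gauss_moment q s (qtransform_at q n A (x_plus_qm1_y q) x_minus_y) m =
      (\<Sum>j\<le>n. \<Sum>i\<le>n. A i * (gauss_binom q (n - j) s * hcoeff (qtransform_term q i (n - i)) j m))"
    unfolding gauss_moment_def hcoeff_qtransform_at
    by (simp add: qtransform_at_def sum_distrib_left algebra_simps)
  also have "\<dots> = (\<Sum>i\<le>n. A i * gauss_moment q s (qtransform_term q i (n - i)) m)"
    by (subst sum.swap) (simp add: gauss_moment_def sum_distrib_left)
  also have "\<dots> = (\<Sum>i\<le>n. A i * ((real q powr m) ^ (n - s) * gauss_binom q (n - i) (n - s)))"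
    using assms by (intro sum.cong refl) (simp add: gauss_moment_qtransform_term)
  finally show ?thesis by (simp add: sum_distrib_left algebra_simps)
qed

section \<open>Linear algebra over a finite subfield\<close>

(* The scalars form a subfield S given as a set, not a type, so spans and independence are
   developed for lists of vectors instead of through the library's vector_space locale. *)
primrec span_list :: "'a::field set \<Rightarrow> ('a \<Rightarrow> 'v::ab_group_add \<Rightarrow> 'v) \<Rightarrow> 'v list \<Rightarrow> 'v set" where
  "span_list S sc [] = {0}"
| "span_list S sc (x # xs) = {sc c x + y | c y. c \<in> S \<and> y \<in> span_list S sc xs}"

primrec indep_list :: "'a::field set \<Rightarrow> ('a \<Rightarrow> 'v::ab_group_add \<Rightarrow> 'v) \<Rightarrow> 'v list \<Rightarrow> bool" where
  "indep_list S sc [] = True"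
| "indep_list S sc (x # xs) = (x \<notin> span_list S sc xs \<and> indep_list S sc xs)"

definition subspace_over :: "'a::field set \<Rightarrow> ('a \<Rightarrow> 'v::ab_group_add \<Rightarrow> 'v) \<Rightarrow> 'v set \<Rightarrow> bool" where
  "subspace_over S sc U \<longleftrightarrow> 0 \<in> U \<and> (\<forall>x\<in>U. \<forall>y\<in>U. x + y \<in> U) \<and> (\<forall>c\<in>S. \<forall>x\<in>U. sc c x \<in> U)"

definition indep_lists :: "'a::field set \<Rightarrow> ('a \<Rightarrow> 'v::ab_group_add \<Rightarrow> 'v) \<Rightarrow> 'v set \<Rightarrow> nat \<Rightarrow> 'v list set" where
  "indep_lists S sc U t = {xs. length xs = t \<and> indep_list S sc xs \<and> set xs \<subseteq> U}"

definition subspaces_dim :: "'a::field set \<Rightarrow> ('a \<Rightarrow> 'v::ab_group_add \<Rightarrow> 'v) \<Rightarrow> 'v set \<Rightarrow> nat \<Rightarrow> 'v set set" where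
  "subspaces_dim S sc U s = {W. subspace_over S sc W \<and> W \<subseteq> U \<and> card W = card S ^ s}"

lemma is_subfieldD:
  assumes "is_subfield S"
  shows "0 \<in> S" "1 \<in> S" "a \<in> S \<Longrightarrow> b \<in> S \<Longrightarrow> a + b \<in> S" "a \<in> S \<Longrightarrow> b \<in> S \<Longrightarrow> a * b \<in> S"
    "a \<in> S \<Longrightarrow> - a \<in> S" "a \<in> S \<Longrightarrow> inverse a \<in> S" "a \<in> S \<Longrightarrow> b \<in> S \<Longrightarrow> a - b \<in> S"
  using assms unfolding is_subfield_def
  by (auto simp: inverse_eq_divide) (metis diff_conv_add_uminus)

lemma subfield_sum: "is_subfield S \<Longrightarrow> (\<And>i. i \<in> I \<Longrightarrow> f i \<in> S) \<Longrightarrow> sum f I \<in> S"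
proof (induct I rule: infinite_finite_induct)
  case (infinite A) then show ?case using is_subfieldD by simp
next
  case empty then show ?case using is_subfieldD by simp
next
  case (insert x F)
  then have "f x \<in> S" "sum f F \<in> S" by auto
  then show ?case using is_subfieldD(3)[OF insert.prems(1)] insert.hyps by simp
qed

lemma card_subfield_ge_2:
  assumes "is_subfield S" "finite S"
  shows "card S \<ge> 2"
proof -
  have "{0, 1} \<subseteq> S" using is_subfieldD[OF assms(1)] by auto
  then have "card {0::'a, 1} \<le> card S" using assms(2) by (intro card_mono) auto
  then show ?thesis by simp
qed

lemma subfield_UNIV: "is_subfield (UNIV :: 'a::field set)"
  by (simp add: is_subfield_def)

lemma span_list_Cons_eq_image:
  "span_list S sc (x # xs) = (\<lambda>(c, y). sc c x + y) ` (S \<times> span_list S sc xs)"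
  by auto

locale subfield_module =
  fixes S :: "'a::field set" and sc :: "'a \<Rightarrow> 'v::ab_group_add \<Rightarrow> 'v"
  assumes subfield_S: "is_subfield S"
    and finite_S: "finite S"
    and scale_right_distrib: "sc a (x + y) = sc a x + sc a y"
    and scale_left_distrib: "sc (a + b) x = sc a x + sc b x"
    and scale_scale: "sc (a * b) x = sc a (sc b x)"
    and scale_one: "sc 1 x = x"
begin

lemma scale_zero_left[simp]: "sc 0 x = 0"
  using scale_left_distrib[of 0 0 x] by simp

lemma scale_zero_right[simp]: "sc a 0 = 0"
  using scale_right_distrib[of a 0 0] by simp

lemma scale_minus_left: "sc (- a) x = - sc a x"
  using scale_left_distrib[of "-a" a x] by (simp add: eq_neg_iff_add_eq_0)

lemma scale_left_diff: "sc (a - b) x = sc a x - sc b x"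
  using scale_left_distrib[of a "-b" x] scale_minus_left by simp

lemma scale_minus_right: "sc a (- x) = - sc a x"
  using scale_right_distrib[of a "-x" x] by (simp add: eq_neg_iff_add_eq_0)

lemmas sfD = is_subfieldD[OF subfield_S]

lemma subspace_over_diff: "subspace_over S sc U \<Longrightarrow> x \<in> U \<Longrightarrow> y \<in> U \<Longrightarrow> x - y \<in> U"
  unfolding subspace_over_def using sfD(2,5) scale_minus_left[of 1 y]
  by (metis diff_conv_add_uminus scale_one)

lemma subspace_over_scale: "subspace_over S sc U \<Longrightarrow> c \<in> S \<Longrightarrow> x \<in> U \<Longrightarrow> sc c x \<in> U"
  unfolding subspace_over_def by blast

lemma subspace_over_add: "subspace_over S sc U \<Longrightarrow> x \<in> U \<Longrightarrow> y \<in> U \<Longrightarrow> x + y \<in> U"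
  unfolding subspace_over_def by blast

lemma subspace_over_zero: "subspace_over S sc U \<Longrightarrow> 0 \<in> U"
  unfolding subspace_over_def by blast

lemma subspace_over_span_list: "subspace_over S sc (span_list S sc xs)"
proof (induct xs)
  case Nil then show ?case by (simp add: subspace_over_def)
next
  case (Cons x xs)
  let ?V = "span_list S sc (x # xs)"
  show ?case unfolding subspace_over_def
  proof (intro conjI ballI)
    show "0 \<in> ?V"
      using sfD(1) subspace_over_zero[OF Cons] by (auto intro!: exI[of _ 0])
  next
    fix a b assume "a \<in> ?V" "b \<in> ?V"
    then obtain c y c' y' where "a = sc c x + y" "b = sc c' x + y'"
      and "c \<in> S" "c' \<in> S" "y \<in> span_list S sc xs" "y' \<in> span_list S sc xs"
      by auto
    moreover from this have "a + b = sc (c + c') x + (y + y')"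
      by (simp add: scale_left_distrib algebra_simps)
    ultimately show "a + b \<in> ?V"
      unfolding span_list.simps using sfD(3) subspace_over_add[OF Cons] by blast
  next
    fix d a assume "d \<in> S" "a \<in> ?V"
    then obtain c y where "a = sc c x + y" "c \<in> S" "y \<in> span_list S sc xs" by auto
    moreover from this have "sc d a = sc (d * c) x + sc d y"
      by (simp add: scale_right_distrib scale_scale)
    ultimately show "sc d a \<in> ?V"
      unfolding span_list.simps using sfD(4) subspace_over_scale[OF Cons] \<open>d \<in> S\<close> by blast
  qed
qed

lemma subspace_over_sum:
  assumes "subspace_over S sc U" "\<And>j. j \<in> J \<Longrightarrow> c j \<in> S" "\<And>j. j \<in> J \<Longrightarrow> x j \<in> U"
  shows "(\<Sum>j\<in>J. sc (c j) (x j)) \<in> U"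
  using assms(2,3)
  by (induct J rule: infinite_finite_induct)
    (auto intro: subspace_over_zero[OF assms(1)] subspace_over_add[OF assms(1)]
      subspace_over_scale[OF assms(1)])

lemma span_list_subset: "subspace_over S sc U \<Longrightarrow> set xs \<subseteq> U \<Longrightarrow> span_list S sc xs \<subseteq> U"
proof (induct xs)
  case Nil then show ?case by (simp add: subspace_over_zero)
next
  case (Cons x xs) then show ?case by (auto intro!: subspace_over_add subspace_over_scale)
qed

lemma finite_span_list: "finite (span_list S sc xs)"
proof (induct xs)
  case Nil then show ?case by simp
next
  case (Cons x xs)
  then show ?case using finite_S unfolding span_list_Cons_eq_image by simp
qed

lemma card_span_list: "indep_list S sc xs \<Longrightarrow> card (span_list S sc xs) = card S ^ length xs"
proof (induct xs)
  case Nil then show ?case by simp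
next
  case (Cons x xs)
  have "inj_on (\<lambda>(c, y). sc c x + y) (S \<times> span_list S sc xs)"
  proof (rule inj_onI, clarify)
    fix c y c' y' assume h: "c \<in> S" "y \<in> span_list S sc xs" "c' \<in> S" "y' \<in> span_list S sc xs"
      "sc c x + y = sc c' x + y'"
    show "c = c' \<and> y = y'"
    proof (cases "c = c'")
      case True then show ?thesis using h by simp
    next
      case False
      have "sc (c - c') x = y' - y" using h(5) by (simp add: scale_left_diff algebra_simps)
      then have "sc (inverse (c - c')) (sc (c - c') x) = sc (inverse (c - c')) (y' - y)" by simp
      then have "x = sc (inverse (c - c')) (y' - y)"
        using False by (simp add: scale_scale[symmetric] scale_one)
      moreover have "sc (inverse (c - c')) (y' - y) \<in> span_list S sc xs"
        using h sfD(6,7) subspace_over_span_list by (intro subspace_over_scale subspace_over_diff) auto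
      ultimately show ?thesis using Cons.prems by simp
    qed
  qed
  then show ?case
    using Cons finite_S finite_span_list unfolding span_list_Cons_eq_image
    by (simp add: card_image card_cartesian_product)
qed

lemma span_list_Cons_self: "x \<in> span_list S sc (x # xs)"
proof -
  have "0 \<in> span_list S sc xs" by (rule subspace_over_zero[OF subspace_over_span_list])
  moreover have "x = sc 1 x + 0" by (simp add: scale_one)
  ultimately show ?thesis using sfD(2) by force
qed

lemma span_list_subset_Cons: "span_list S sc xs \<subseteq> span_list S sc (x # xs)"
proof
  fix y assume "y \<in> span_list S sc xs"
  moreover have "y = sc 0 x + y" by simp
  ultimately show "y \<in> span_list S sc (x # xs)" using sfD(1) by force
qed

lemma set_subset_span_list: "set xs \<subseteq> span_list S sc xs"
proof (induct xs)
  case (Cons x xs) then show ?case using span_list_Cons_self[of x xs] span_list_subset_Cons[of xs x] by auto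
qed simp

lemma finite_indep_lists: "finite U \<Longrightarrow> finite (indep_lists S sc U t)"
  unfolding indep_lists_def
  by (rule finite_subset[OF _ finite_lists_length_eq[of U t]]) auto

lemma card_indep_lists:
  assumes U: "subspace_over S sc U" "finite U" "card U = card S ^ d"
  shows "real (card (indep_lists S sc U t)) = gauss_prod (card S) d t"
proof (induct t)
  case 0
  have "indep_lists S sc U 0 = {[]}" by (auto simp: indep_lists_def)
  then show ?case by (simp add: gauss_prod_def)
next
  case (Suc t)
  let ?Ext = "SIGMA xs:indep_lists S sc U t. U - span_list S sc xs"
  have split: "indep_lists S sc U (Suc t) = (\<lambda>(xs, x). x # xs) ` ?Ext"
  proof (intro equalityI subsetI)
    fix ys assume "ys \<in> indep_lists S sc U (Suc t)"
    then obtain x xs where "ys = x # xs" "xs \<in> indep_lists S sc U t" "x \<in> U - span_list S sc xs"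
      unfolding indep_lists_def by (cases ys) auto
    then show "ys \<in> (\<lambda>(xs, x). x # xs) ` ?Ext" by (auto intro!: image_eqI[of _ _ "(xs, x)"])
  qed (auto simp: indep_lists_def)
  have card_ext: "real (card (U - span_list S sc xs)) = real (card S) ^ d - real (card S) ^ t"
    if "xs \<in> indep_lists S sc U t" for xs
  proof -
    have sub: "span_list S sc xs \<subseteq> U" using that U by (intro span_list_subset) (auto simp: indep_lists_def)
    moreover have "card (span_list S sc xs) = card S ^ t"
      using that card_span_list by (auto simp: indep_lists_def)
    ultimately show ?thesis
      using U that card_mono[OF U(2) sub] by (simp add: card_Diff_subset finite_span_list of_nat_diff)
  qed
  have "real (card (indep_lists S sc U (Suc t))) =
      (\<Sum>xs\<in>indep_lists S sc U t. real (card (U - span_list S sc xs)))"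
    unfolding split using U(2) finite_indep_lists by (simp add: card_image inj_on_def)
  also have "\<dots> = real (card (indep_lists S sc U t)) * (real (card S) ^ d - real (card S) ^ t)"
    using card_ext by simp
  finally show ?case using Suc by (simp add: gauss_prod_Suc)
qed

lemma card_S_ge_2: "card S \<ge> 2"
  using card_subfield_ge_2 subfield_S finite_S .

lemma exists_basis_list:
  assumes "subspace_over S sc U" "finite U"
  shows "\<exists>xs. indep_list S sc xs \<and> set xs \<subseteq> U \<and> span_list S sc xs = U"
proof -
  define L where "L = {length xs | xs. indep_list S sc xs \<and> set xs \<subseteq> U}"
  have bnd: "l \<le> card U" if "l \<in> L" for l
  proof -
    obtain xs where xs: "l = length xs" "indep_list S sc xs" "set xs \<subseteq> U" using \<open>l \<in> L\<close> by (auto simp: L_def)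
    have "card (span_list S sc xs) \<le> card U" using xs assms span_list_subset by (intro card_mono) auto
    then have "card S ^ l \<le> card U" using xs card_span_list by simp
    moreover have "l < card S ^ l" using card_S_ge_2 by (intro less_exp[THEN less_le_trans] power_mono) auto
    ultimately show ?thesis by simp
  qed
  have "finite L" using bnd by (meson finite_nat_set_iff_bounded_le)
  moreover have "0 \<in> L" by (auto simp: L_def intro!: exI[of _ "[]"])
  ultimately have "Max L \<in> L" by (intro Max_in) auto
  then obtain xs where xs: "Max L = length xs" "indep_list S sc xs" "set xs \<subseteq> U" by (auto simp: L_def)
  have "span_list S sc xs = U"
  proof (rule ccontr)
    assume "span_list S sc xs \<noteq> U"
    moreover have "span_list S sc xs \<subseteq> U" using xs assms span_list_subset by auto
    ultimately obtain x where "x \<in> U" "x \<notin> span_list S sc xs" by auto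
    then have "length (x # xs) \<in> L" using xs by (auto simp: L_def intro!: exI[of _ "x # xs"])
    then have "length (x # xs) \<le> Max L" using \<open>finite L\<close> by simp
    then show False using xs by simp
  qed
  then show ?thesis using xs by blast
qed

lemma span_list_indep_lists:
  assumes "xs \<in> indep_lists S sc W t" "subspace_over S sc W" "finite W" "card W = card S ^ t"
  shows "span_list S sc xs = W"
proof -
  have "span_list S sc xs \<subseteq> W" using assms span_list_subset by (auto simp: indep_lists_def)
  moreover have "card (span_list S sc xs) = card W" using assms card_span_list by (auto simp: indep_lists_def)
  ultimately show ?thesis using assms(3) by (simp add: card_subset_eq)
qed

lemma indep_lists_eq_UN_subspaces_dim:
  assumes "subspace_over S sc U"
  shows "indep_lists S sc U s = (\<Union>W\<in>subspaces_dim S sc U s. indep_lists S sc W s)"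
proof (intro equalityI subsetI)
  fix xs assume xs: "xs \<in> indep_lists S sc U s"
  then have "span_list S sc xs \<in> subspaces_dim S sc U s"
    using assms subspace_over_span_list span_list_subset card_span_list
    by (auto simp: subspaces_dim_def indep_lists_def)
  moreover have "xs \<in> indep_lists S sc (span_list S sc xs) s"
    using xs set_subset_span_list by (auto simp: indep_lists_def)
  ultimately show "xs \<in> (\<Union>W\<in>subspaces_dim S sc U s. indep_lists S sc W s)" by blast
qed (auto simp: indep_lists_def subspaces_dim_def)

lemma card_subspaces_dim:
  assumes U: "subspace_over S sc U" "finite U" "card U = card S ^ d"
  shows "real (card (subspaces_dim S sc U s)) = gauss_binom (card S) d s"
proof -
  have fin_subspaces: "finite (subspaces_dim S sc U s)"
    by (rule finite_subset[of _ "Pow U"]) (auto simp: subspaces_dim_def U)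
  have W: "subspace_over S sc W" "finite W" "card W = card S ^ s" if "W \<in> subspaces_dim S sc U s" for W
    using that U(2) by (auto simp: subspaces_dim_def intro: finite_subset)
  have disjoint: "indep_lists S sc W s \<inter> indep_lists S sc W' s = {}"
    if "W \<in> subspaces_dim S sc U s" "W' \<in> subspaces_dim S sc U s" "W \<noteq> W'" for W W'
    using that span_list_indep_lists[OF _ W(1-3)] span_list_indep_lists[OF _ W(1-3)] by blast
  have "gauss_prod (card S) d s = (\<Sum>W\<in>subspaces_dim S sc U s. real (card (indep_lists S sc W s)))"
    unfolding card_indep_lists[OF U, symmetric] indep_lists_eq_UN_subspaces_dim[OF U(1)]
    using fin_subspaces disjoint W(2) finite_indep_lists by (subst card_UN_disjoint) auto
  also have "\<dots> = real (card (subspaces_dim S sc U s)) * gauss_prod (card S) s s"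
    using card_indep_lists[OF W] by simp
  finally show ?thesis
    using gauss_prod_nonzero[OF card_S_ge_2 order_refl] by (simp add: gauss_binom_def)
qed

lemma mem_span_list_iff: "x \<in> span_list S sc xs \<longleftrightarrow>
   (\<exists>c. (\<forall>j<length xs. c j \<in> S) \<and> x = (\<Sum>j<length xs. sc (c j) (xs ! j)))"
proof (induct xs arbitrary: x)
  case Nil then show ?case by simp
next
  case (Cons a xs)
  show ?case
  proof
    assume "x \<in> span_list S sc (a # xs)"
    then obtain d y where dy: "x = sc d a + y" "d \<in> S" "y \<in> span_list S sc xs" by auto
    then obtain c where c: "\<forall>j<length xs. c j \<in> S" "y = (\<Sum>j<length xs. sc (c j) (xs ! j))" using Cons by blast
    define c' where "c' = (\<lambda>j. case j of 0 \<Rightarrow> d | Suc j \<Rightarrow> c j)"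
    have "\<forall>j<length (a # xs). c' j \<in> S" using c dy by (auto simp: c'_def less_Suc_eq_0_disj)
    moreover have "x = (\<Sum>j<length (a # xs). sc (c' j) ((a # xs) ! j))"
      using dy c by (simp only: length_Cons sum.lessThan_Suc_shift) (simp add: c'_def)
    ultimately show "\<exists>c. (\<forall>j<length (a # xs). c j \<in> S) \<and> x = (\<Sum>j<length (a # xs). sc (c j) ((a # xs) ! j))"
      by blast
  next
    assume "\<exists>c. (\<forall>j<length (a # xs). c j \<in> S) \<and> x = (\<Sum>j<length (a # xs). sc (c j) ((a # xs) ! j))"
    then obtain c where c: "\<forall>j<Suc (length xs). c j \<in> S"
      "x = (\<Sum>j<Suc (length xs). sc (c j) ((a # xs) ! j))"
      by auto
    have x: "x = sc (c 0) a + (\<Sum>j<length xs. sc (c (Suc j)) (xs ! j))"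
      using c(2) by (simp only: sum.lessThan_Suc_shift) simp
    have "(\<Sum>j<length xs. sc (c (Suc j)) (xs ! j)) \<in> span_list S sc xs"
      unfolding Cons[of "\<Sum>j<length xs. sc (c (Suc j)) (xs ! j)"] using c(1)
      by (intro exI[of _ "\<lambda>j. c (Suc j)"]) auto
    moreover have "c 0 \<in> S" using c(1) by auto
    ultimately show "x \<in> span_list S sc (a # xs)" using x by auto
  qed
qed

lemma indep_list_coeffs_eq_0: "indep_list S sc xs \<Longrightarrow> (\<forall>j<length xs. c j \<in> S) \<Longrightarrow>
   (\<Sum>j<length xs. sc (c j) (xs ! j)) = 0 \<Longrightarrow> j < length xs \<Longrightarrow> c j = 0"
proof (induct xs arbitrary: c j)
  case Nil then show ?case by simp
next
  case (Cons a xs)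
  define R where "R = (\<Sum>j<length xs. sc (c (Suc j)) (xs ! j))"
  have s: "sc (c 0) a + R = 0" using Cons.prems(3) unfolding R_def length_Cons sum.lessThan_Suc_shift by simp
  have RL: "R \<in> span_list S sc xs" unfolding R_def mem_span_list_iff using Cons.prems(2)
    by (intro exI[of _ "\<lambda>j. c (Suc j)"]) auto
  have c0: "c 0 = 0"
  proof (rule ccontr)
    assume nz: "c 0 \<noteq> 0"
    have "sc (c 0) a = - R" using s by (simp add: eq_neg_iff_add_eq_0)
    then have "sc (inverse (c 0)) (sc (c 0) a) = sc (inverse (c 0)) (- R)" by simp
    then have "a = sc (- inverse (c 0)) R"
      using nz by (simp add: scale_scale[symmetric] scale_one scale_minus_left scale_minus_right)
    moreover have "sc (- inverse (c 0)) R \<in> span_list S sc xs"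
      using RL Cons.prems(2) sfD(5,6) by (intro subspace_over_scale[OF subspace_over_span_list]) auto
    ultimately show False using Cons.prems(1) by simp
  qed
  then have R0: "R = 0" using s by simp
  show ?case
  proof (cases j)
    case 0 then show ?thesis using c0 by simp
  next
    case (Suc j')
    have "(\<lambda>j. c (Suc j)) j' = 0"
      using Cons.hyps[of "\<lambda>j. c (Suc j)" j'] Cons.prems Suc R0 by (auto simp: R_def)
    then show ?thesis using Suc by simp
  qed
qed

end

section \<open>Orthogonality and rank in coordinate spaces\<close>

definition vecs_over :: "'a::field set \<Rightarrow> nat \<Rightarrow> (nat \<Rightarrow> 'a) set" where
  "vecs_over S n = {v. (\<forall>i. v i \<in> S) \<and> (\<forall>i\<ge>n. v i = 0)}"

definition dot :: "nat \<Rightarrow> (nat \<Rightarrow> 'a::field) \<Rightarrow> (nat \<Rightarrow> 'a) \<Rightarrow> 'a" where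
  "dot n u v = (\<Sum>i<n. u i * v i)"

definition orth :: "'a::field set \<Rightarrow> nat \<Rightarrow> (nat \<Rightarrow> 'a) set \<Rightarrow> (nat \<Rightarrow> 'a) set" where
  "orth S n X = {v \<in> vecs_over S n. \<forall>u\<in>X. dot n u v = 0}"

lemma vecs_over_UNIV: "vecs_over UNIV n = vecs n"
  by (auto simp: vecs_over_def vecs_def)

lemma dual_code_eq_orth: "dual_code n C = orth UNIV n C"
  by (simp add: dual_code_def orth_def vecs_over_UNIV dot_def)

lemma dot_commute: "dot n u v = dot n v u"
  by (simp add: dot_def mult.commute)

lemma dot_zero [simp]: "dot n u 0 = 0" "dot n 0 u = 0"
  by (simp_all add: dot_def)

lemma dot_add_left: "dot n (x + y) u = dot n x u + dot n y u"
  by (simp add: dot_def sum.distrib algebra_simps)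

lemma dot_add_right: "dot n u (x + y) = dot n u x + dot n u y"
  by (simp add: dot_def sum.distrib algebra_simps)

lemma dot_diff_left: "dot n (x - y) u = dot n x u - dot n y u"
  by (simp add: dot_def sum_subtractf algebra_simps)

lemma dot_vscale_left: "dot n (vscale c x) u = c * dot n x u"
  by (simp add: dot_def vscale_def sum_distrib_left algebra_simps)

lemma dot_vscale_right: "dot n u (vscale c x) = c * dot n u x"
  by (simp add: dot_def vscale_def sum_distrib_left algebra_simps)

lemma sum_card_filter_swap:
  assumes "finite A" "finite B"
  shows "(\<Sum>a\<in>A. card {b\<in>B. P a b}) = (\<Sum>b\<in>B. card {a\<in>A. P a b})"
proof -
  have "card {b\<in>B. P a b} = (\<Sum>b\<in>B. of_bool (P a b))" for a
    using assms(2) by (simp add: Int_def conj_commute)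
  moreover have "card {a\<in>A. P a b} = (\<Sum>a\<in>A. of_bool (P a b))" for b
    using assms(1) by (simp add: Int_def conj_commute)
  ultimately show ?thesis
    by (simp only:) (rule sum.swap)
qed

lemma card_eq_card_image_mult_card_kernel:
  fixes f :: "'v::ab_group_add \<Rightarrow> 'w::ab_group_add"
  assumes "finite U"
    and add: "\<And>x y. x \<in> U \<Longrightarrow> y \<in> U \<Longrightarrow> x + y \<in> U" and diff: "\<And>x y. x \<in> U \<Longrightarrow> y \<in> U \<Longrightarrow> x - y \<in> U"
    and f_add: "\<And>x y. x \<in> U \<Longrightarrow> y \<in> U \<Longrightarrow> f (x + y) = f x + f y"
  shows "card U = card (f ` U) * card {u\<in>U. f u = 0}"
proof -
  have f_diff: "f (x - y) = f x - f y" if "x \<in> U" "y \<in> U" for x y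
    using f_add[OF diff[OF that] that(2)] by (simp add: algebra_simps)
  have fibre: "card {x\<in>U. f x = y} = card {u\<in>U. f u = 0}" if "y \<in> f ` U" for y
  proof -
    obtain x0 where x0: "x0 \<in> U" "f x0 = y" using \<open>y \<in> f ` U\<close> by auto
    have "bij_betw (\<lambda>x. x - x0) {x\<in>U. f x = y} {u\<in>U. f u = 0}"
      by (rule bij_betwI[where g = "\<lambda>u. u + x0"]) (use x0 add diff f_add f_diff in auto)
    then show ?thesis by (rule bij_betw_same_card)
  qed
  have "card U = (\<Sum>y\<in>f ` U. card {x\<in>U. f x = y})"
    using sum.group[of U "f ` U" f "\<lambda>_. 1::nat"] \<open>finite U\<close> by simp
  also have "\<dots> = card (f ` U) * card {u\<in>U. f u = 0}"
    using fibre by simp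
  finally show ?thesis .
qed

definition span_over :: "'a::field set \<Rightarrow> ('b \<Rightarrow> 'a) \<Rightarrow> 'b set \<Rightarrow> 'a set" where
  "span_over S v I = {(\<Sum>i\<in>I. c i * v i) | c. \<forall>i\<in>I. c i \<in> S}"

lemma span_overI: "(\<And>i. i \<in> I \<Longrightarrow> c i \<in> S) \<Longrightarrow> (\<Sum>i\<in>I. c i * v i) \<in> span_over S v I"
  unfolding span_over_def by blast

locale subfield_vectors =
  fixes S :: "'a::field set" and n :: nat
  assumes subfield: "is_subfield S" and finite: "finite S"
begin

sublocale subfield_module S vscale
  by unfold_locales (auto simp: subfield finite vscale_def fun_eq_iff algebra_simps)

sublocale scalar: subfield_module S "(*) :: 'a \<Rightarrow> 'a \<Rightarrow> 'a"
  by unfold_locales (auto simp: subfield finite algebra_simps)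

lemma subspace_vecs_over: "subspace_over S vscale (vecs_over S n)"
  unfolding subspace_over_def vecs_over_def vscale_def using sfD by (auto simp: plus_fun_def)

lemma bij_betw_vecs_over_PiE:
  "bij_betw (\<lambda>v. restrict v {..<n}) (vecs_over S n) (PiE {..<n} (\<lambda>_. S))"
proof (rule bij_betwI[where g = "\<lambda>g i. if i < n then g i else 0"])
  show "(\<lambda>g i. if i < n then g i else 0) \<in> PiE {..<n} (\<lambda>_. S) \<rightarrow> vecs_over S n"
    using sfD(1) by (auto simp: vecs_over_def PiE_def Pi_def)
qed (auto simp: vecs_over_def fun_eq_iff PiE_def extensional_def)

lemma card_vecs_over: "card (vecs_over S n) = card S ^ n"
  using bij_betw_same_card[OF bij_betw_vecs_over_PiE] by (simp add: card_PiE)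

lemma finite_vecs_over: "finite (vecs_over S n)"
  using bij_betw_finite[OF bij_betw_vecs_over_PiE] finite by (simp add: finite_PiE)

lemma finite_subset_vecs_over: "X \<subseteq> vecs_over S n \<Longrightarrow> finite X"
  using finite_subset finite_vecs_over by blast

lemma dot_in_subfield: "u \<in> vecs_over S n \<Longrightarrow> v \<in> vecs_over S n \<Longrightarrow> dot n u v \<in> S"
  unfolding dot_def vecs_over_def by (intro subfield_sum[OF subfield] sfD(4)) auto

lemma subspace_orth: "subspace_over S vscale (orth S n X)"
  using subspace_vecs_over unfolding subspace_over_def orth_def
  by (auto simp: dot_add_right dot_vscale_right)

lemma orth_subset: "orth S n X \<subseteq> vecs_over S n"
  by (auto simp: orth_def)

lemma card_orth_vec:
  assumes C: "subspace_over S vscale C" "C \<subseteq> vecs_over S n" and u: "u \<in> vecs_over S n"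
  shows "real (card {x\<in>C. dot n x u = 0}) =
    real (card C) / card S + (1 - 1 / card S) * real (card C) * of_bool (\<forall>x\<in>C. dot n x u = 0)"
proof (cases "\<forall>x\<in>C. dot n x u = 0")
  case True
  then have "{x\<in>C. dot n x u = 0} = C" by auto
  with True show ?thesis by (simp add: algebra_simps)
next
  case False
  then obtain x0 where x0: "x0 \<in> C" "dot n x0 u \<noteq> 0" by auto
  define x1 where "x1 = vscale (inverse (dot n x0 u)) x0"
  have x1: "x1 \<in> C" "dot n x1 u = 1"
    using x0 C u dot_in_subfield sfD(6)
    by (auto simp: x1_def dot_vscale_left intro!: subspace_over_scale)
  define Z where "Z = {x\<in>C. dot n x u = 0}"
  have "bij_betw (\<lambda>(z, c). z + vscale c x1) (Z \<times> S) C"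
  proof (rule bij_betwI[where g = "\<lambda>x. (x - vscale (dot n x u) x1, dot n x u)"])
    show "(\<lambda>(z, c). z + vscale c x1) \<in> Z \<times> S \<rightarrow> C"
      using C(1) x1 by (auto simp: Z_def intro!: subspace_over_add subspace_over_scale)
    show "(\<lambda>x. (x - vscale (dot n x u) x1, dot n x u)) \<in> C \<rightarrow> Z \<times> S"
      using C x1 u dot_in_subfield
      by (auto simp: Z_def dot_diff_left dot_vscale_left intro!: subspace_over_diff subspace_over_scale)
  qed (auto simp: Z_def dot_add_left dot_vscale_left x1)
  then have "card C = card Z * card S"
    by (simp add: bij_betw_same_card[symmetric] card_cartesian_product)
  moreover have "card S > 0" using card_S_ge_2 by simp
  ultimately show ?thesis using False by (simp add: Z_def field_simps)
qed

lemma sum_card_orth_vec: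
  assumes X: "subspace_over S vscale X" "X \<subseteq> vecs_over S n" and Y: "Y \<subseteq> vecs_over S n"
  shows "(\<Sum>u\<in>Y. real (card {x\<in>X. dot n x u = 0})) =
    real (card X) * real (card Y) / card S + (1 - 1 / card S) * real (card X) * real (card (Y \<inter> orth S n X))"
proof -
  have "(\<Sum>u\<in>Y. real (card {x\<in>X. dot n x u = 0})) = (\<Sum>u\<in>Y.
      real (card X) / card S + (1 - 1 / card S) * real (card X) * of_bool (\<forall>x\<in>X. dot n x u = 0))"
    using Y by (intro sum.cong refl card_orth_vec[OF X]) auto
  also have "\<dots> = real (card Y) * (real (card X) / card S) +
      (1 - 1 / card S) * real (card X) * (\<Sum>u\<in>Y. of_bool (\<forall>x\<in>X. dot n x u = 0))"
    by (simp add: sum.distrib sum_distrib_left)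
  also have "(\<Sum>u\<in>Y. of_bool (\<forall>x\<in>X. dot n x u = 0)) = real (card (Y \<inter> orth S n X))"
  proof -
    have "Y \<inter> orth S n X = Y \<inter> {u. \<forall>x\<in>X. dot n x u = 0}" using Y by (auto simp: orth_def)
    then show ?thesis using finite_subset_vecs_over[OF Y] by simp
  qed
  finally show ?thesis by simp
qed

lemma card_orth_inter_swap:
  assumes C: "subspace_over S vscale C" "C \<subseteq> vecs_over S n"
    and D: "subspace_over S vscale D" "D \<subseteq> vecs_over S n"
  shows "card C * card (D \<inter> orth S n C) = card D * card (C \<inter> orth S n D)"
proof -
  have "(\<Sum>u\<in>D. card {x\<in>C. dot n x u = 0}) = (\<Sum>x\<in>C. card {u\<in>D. dot n x u = 0})"
    using C(2) D(2) finite_subset_vecs_over by (intro sum_card_filter_swap) auto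
  also have "\<dots> = (\<Sum>x\<in>C. card {u\<in>D. dot n u x = 0})"
    by (simp add: dot_commute[of n _ x for x])
  finally have "(\<Sum>u\<in>D. real (card {x\<in>C. dot n x u = 0})) = (\<Sum>x\<in>C. real (card {u\<in>D. dot n u x = 0}))"
    by (simp only: of_nat_sum[symmetric])
  then have "(1 - 1 / card S) * (real (card C) * real (card (D \<inter> orth S n C))) =
      (1 - 1 / card S) * (real (card D) * real (card (C \<inter> orth S n D)))"
    unfolding sum_card_orth_vec[OF C D(2)] sum_card_orth_vec[OF D C(2)] by (simp add: algebra_simps)
  with card_S_ge_2 have
    "real (card C) * real (card (D \<inter> orth S n C)) = real (card D) * real (card (C \<inter> orth S n D))"
    by (subst (asm) mult_left_cancel) auto
  then show ?thesis by (simp only: of_nat_mult[symmetric] of_nat_eq_iff)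
qed

lemma orth_vecs_over: "orth S n (vecs_over S n) = {0}"
proof -
  have "v i = 0" if v: "v \<in> orth S n (vecs_over S n)" for v i
  proof (cases "i < n")
    case True
    let ?e = "\<lambda>j. if j = i then 1 else 0"
    have "?e \<in> vecs_over S n" using sfD(1,2) True by (auto simp: vecs_over_def)
    then have "dot n ?e v = 0" using v by (auto simp: orth_def)
    moreover have "dot n ?e v = (\<Sum>j<n. if j = i then v j else 0)"
      unfolding dot_def by (intro sum.cong) auto
    ultimately show ?thesis using True by simp
  next
    case False
    then show ?thesis using v by (auto simp: orth_def vecs_over_def)
  qed
  then show ?thesis using subspace_over_zero[OF subspace_orth] by fastforce
qed

lemma card_orth:
  assumes X: "subspace_over S vscale X" "X \<subseteq> vecs_over S n"
  shows "card X * card (orth S n X) = card S ^ n"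
proof -
  have "card (vecs_over S n) * card (X \<inter> orth S n (vecs_over S n)) =
      card X * card (vecs_over S n \<inter> orth S n X)"
    by (rule card_orth_inter_swap[OF subspace_vecs_over _ X]) simp
  moreover have "X \<inter> orth S n (vecs_over S n) = {0}"
    using orth_vecs_over subspace_over_zero[OF X(1)] by auto
  moreover have "vecs_over S n \<inter> orth S n X = orth S n X" using orth_subset by auto
  ultimately show ?thesis by (simp add: card_vecs_over)
qed

lemma orth_orth:
  assumes X: "subspace_over S vscale X" "X \<subseteq> vecs_over S n"
  shows "orth S n (orth S n X) = X"
proof -
  have sub: "X \<subseteq> orth S n (orth S n X)" using X(2) by (auto simp: orth_def dot_commute)
  have fin: "finite (orth S n X)" "finite (orth S n (orth S n X))"
    using finite_subset_vecs_over orth_subset by auto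
  have "card X * card (orth S n X) = card (orth S n (orth S n X)) * card (orth S n X)"
    using card_orth[OF X] card_orth[OF subspace_orth orth_subset, of X] by (simp add: mult.commute)
  moreover have "card (orth S n X) > 0"
    using subspace_over_zero[OF subspace_orth] fin by (auto simp: card_gt_0_iff)
  ultimately have "card (orth S n (orth S n X)) = card X" by simp
  then show ?thesis using card_subset_eq[OF fin(2) sub] by simp
qed

lemma subspace_span_over: "subspace_over S (*) (span_over S v I)"
  unfolding subspace_over_def
proof (intro conjI ballI)
  show "0 \<in> span_over S v I"
    using span_overI[of I "\<lambda>_. 0"] sfD(1) by simp
next
  fix x y assume "x \<in> span_over S v I" "y \<in> span_over S v I"
  then obtain c d where "x = (\<Sum>i\<in>I. c i * v i)" "\<forall>i\<in>I. c i \<in> S"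
    "y = (\<Sum>i\<in>I. d i * v i)" "\<forall>i\<in>I. d i \<in> S"
    unfolding span_over_def by blast
  then have "x + y = (\<Sum>i\<in>I. (c i + d i) * v i)" "\<forall>i\<in>I. c i + d i \<in> S"
    using sfD(3) by (simp_all add: sum.distrib algebra_simps)
  then show "x + y \<in> span_over S v I" using span_overI[of I "\<lambda>i. c i + d i"] by simp
next
  fix a x assume "a \<in> S" "x \<in> span_over S v I"
  then obtain c where "x = (\<Sum>i\<in>I. c i * v i)" "\<forall>i\<in>I. c i \<in> S"
    unfolding span_over_def by blast
  then have "a * x = (\<Sum>i\<in>I. (a * c i) * v i)" "\<forall>i\<in>I. a * c i \<in> S"
    using sfD(4) \<open>a \<in> S\<close> by (simp_all add: sum_distrib_left algebra_simps)
  then show "a * x \<in> span_over S v I" using span_overI[of I "\<lambda>i. a * c i"] by simp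
qed

lemma card_span_over:
  assumes "lin_indep_over S v I" "finite I"
  shows "card (span_over S v I) = card S ^ card I"
proof -
  have "bij_betw (\<lambda>c. \<Sum>i\<in>I. c i * v i) (PiE I (\<lambda>_. S)) (span_over S v I)"
  proof (rule bij_betw_imageI)
    show "inj_on (\<lambda>c. \<Sum>i\<in>I. c i * v i) (PiE I (\<lambda>_. S))"
    proof (rule inj_onI)
      fix c d assume c: "c \<in> PiE I (\<lambda>_. S)" and d: "d \<in> PiE I (\<lambda>_. S)"
        and eq: "(\<Sum>i\<in>I. c i * v i) = (\<Sum>i\<in>I. d i * v i)"
      have "(\<Sum>i\<in>I. (c i - d i) * v i) = 0" using eq by (simp add: sum_subtractf algebra_simps)
      moreover have "\<forall>i\<in>I. c i - d i \<in> S" using c d sfD(7) by auto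
      ultimately have "\<forall>i\<in>I. c i - d i = 0"
        using assms(1)[unfolded lin_indep_over_def, rule_format, of "\<lambda>i. c i - d i"] by blast
      then show "c = d" using c d by (auto simp: PiE_def extensional_def fun_eq_iff)
    qed
    show "(\<lambda>c. \<Sum>i\<in>I. c i * v i) ` PiE I (\<lambda>_. S) = span_over S v I"
    proof (intro equalityI subsetI)
      fix x assume "x \<in> span_over S v I"
      then obtain c where "x = (\<Sum>i\<in>I. c i * v i)" "\<forall>i\<in>I. c i \<in> S" by (auto simp: span_over_def)
      then show "x \<in> (\<lambda>c. \<Sum>i\<in>I. c i * v i) ` PiE I (\<lambda>_. S)"
        by (intro image_eqI[of _ _ "restrict c I"]) auto
    qed (auto simp: span_over_def PiE_def Pi_def)
  qed
  then show ?thesis using assms(2) by (simp add: bij_betw_same_card[symmetric] card_PiE)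
qed

lemma mem_span_over_if_dependent:
  assumes indep: "lin_indep_over S v I" and "finite I"
    and dep: "\<not> lin_indep_over S v (insert j I)"
  shows "v j \<in> span_over S v I"
proof -
  have "j \<notin> I" using indep dep by (auto simp: insert_absorb)
  obtain c where c: "\<forall>i\<in>insert j I. c i \<in> S" "(\<Sum>i\<in>insert j I. c i * v i) = 0"
    and nz: "\<exists>i\<in>insert j I. c i \<noteq> 0"
    using dep unfolding lin_indep_over_def by blast
  have sum: "c j * v j + (\<Sum>i\<in>I. c i * v i) = 0" using c(2) \<open>j \<notin> I\<close> \<open>finite I\<close> by simp
  have "c j \<noteq> 0"
  proof
    assume "c j = 0"
    then have "\<forall>i\<in>I. c i = 0" using sum c(1) indep unfolding lin_indep_over_def by auto
    with nz \<open>c j = 0\<close> show False by auto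
  qed
  have "(\<Sum>i\<in>I. (- c i / c j) * v i) = (- 1 / c j) * (\<Sum>i\<in>I. c i * v i)"
    by (simp add: sum_distrib_left)
  also have "(\<Sum>i\<in>I. c i * v i) = - (c j * v j)"
    using sum by (simp add: eq_neg_iff_add_eq_0 add.commute)
  finally have "v j = (\<Sum>i\<in>I. (- c i / c j) * v i)"
    using \<open>c j \<noteq> 0\<close> by simp
  moreover have "\<forall>i\<in>I. - c i / c j \<in> S" using c(1) sfD(4,5,6) by (auto simp: divide_inverse)
  ultimately show ?thesis using span_overI[of I "\<lambda>i. - c i / c j"] by simp
qed

lemma finite_rank_set: "finite {card I | I. I \<subseteq> {..<n} \<and> lin_indep_over S v I}"
  by (rule finite_subset[of _ "{..n}"]) (auto dest: card_mono[OF finite_lessThan])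

lemma obtain_rk_indep_set:
  obtains I where "I \<subseteq> {..<n}" "lin_indep_over S v I" "card I = rk S n v"
    and "\<forall>j<n. v j \<in> span_over S v I"
proof -
  let ?R = "{card I | I. I \<subseteq> {..<n} \<and> lin_indep_over S v I}"
  have "{} \<subseteq> {..<n} \<and> lin_indep_over S v {}" by (simp add: lin_indep_over_def)
  then have "?R \<noteq> {}" by blast
  then have "rk S n v \<in> ?R" unfolding rk_def by (intro Max_in finite_rank_set)
  then obtain I where I: "I \<subseteq> {..<n}" "lin_indep_over S v I" "card I = rk S n v" by auto
  have fin: "finite I" using I(1) finite_subset by blast
  have "v j \<in> span_over S v I" if "j < n" for j
  proof (cases "j \<in> I")
    case True
    have "(\<Sum>i\<in>I. (if i = j then 1 else 0) * v i) = (\<Sum>i\<in>I. if i = j then v i else 0)"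
      by (intro sum.cong) auto
    also have "\<dots> = v j"
      using True fin by simp
    finally have "v j = (\<Sum>i\<in>I. (if i = j then 1 else 0) * v i)" ..
    moreover have "(\<Sum>i\<in>I. (if i = j then 1 else 0) * v i) \<in> span_over S v I"
      using sfD(1,2) by (intro span_overI) auto
    ultimately show ?thesis by simp
  next
    case False
    have "insert j I \<subseteq> {..<n}" using I(1) \<open>j < n\<close> by simp
    then have "card (insert j I) \<le> rk S n v" if "lin_indep_over S v (insert j I)"
      unfolding rk_def using that by (intro Max_ge finite_rank_set) blast
    then have "\<not> lin_indep_over S v (insert j I)" using False fin I(3) by auto
    then show ?thesis by (rule mem_span_over_if_dependent[OF I(2) fin])
  qed
  then show ?thesis using that[OF I] by blast
qed

lemma rk_le: "rk S n v \<le> n"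
proof -
  obtain I where "I \<subseteq> {..<n}" "card I = rk S n v"
    by (rule obtain_rk_indep_set)
  then show ?thesis using card_mono[of "{..<n}" I] by simp
qed

lemma image_dot_vecs_over:
  assumes "I \<subseteq> {..<n}" and span: "\<forall>j<n. v j \<in> span_over S v I"
  shows "(\<lambda>w. dot n w v) ` vecs_over S n = span_over S v I"
proof (intro equalityI subsetI)
  fix x assume "x \<in> (\<lambda>w. dot n w v) ` vecs_over S n"
  then obtain w where w: "w \<in> vecs_over S n" "x = (\<Sum>j<n. w j * v j)" by (auto simp: dot_def)
  have "(\<Sum>j<n. w j * v j) \<in> span_over S v I"
    using w(1) span by (intro scalar.subspace_over_sum[OF subspace_span_over]) (auto simp: vecs_over_def)
  then show "x \<in> span_over S v I" using w(2) by simp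
next
  fix x assume "x \<in> span_over S v I"
  then obtain c where c: "x = (\<Sum>i\<in>I. c i * v i)" "\<forall>i\<in>I. c i \<in> S" by (auto simp: span_over_def)
  define w where "w = (\<lambda>i. if i \<in> I then c i else 0)"
  have "w \<in> vecs_over S n" using c(2) assms(1) sfD(1) by (auto simp: w_def vecs_over_def)
  moreover have "dot n w v = x"
  proof -
    have "dot n w v = (\<Sum>i<n. if i \<in> I then c i * v i else 0)"
      unfolding dot_def w_def by (intro sum.cong) auto
    also have "\<dots> = (\<Sum>i\<in>{..<n} \<inter> I. c i * v i)"
      by (simp add: sum.If_cases)
    also have "{..<n} \<inter> I = I" using assms(1) by auto
    finally show ?thesis using c by simp
  qed
  ultimately show "x \<in> (\<lambda>w. dot n w v) ` vecs_over S n" by force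
qed

lemma card_rank_kernel: "card {w \<in> vecs_over S n. dot n w v = 0} = card S ^ (n - rk S n v)"
proof -
  obtain I where I: "I \<subseteq> {..<n}" "lin_indep_over S v I" "card I = rk S n v"
    and span: "\<forall>j<n. v j \<in> span_over S v I"
    by (rule obtain_rk_indep_set)
  have "card (vecs_over S n) =
      card ((\<lambda>w. dot n w v) ` vecs_over S n) * card {w \<in> vecs_over S n. dot n w v = 0}"
  proof (rule card_eq_card_image_mult_card_kernel[OF finite_vecs_over])
    show "x + y \<in> vecs_over S n" "x - y \<in> vecs_over S n"
      if "x \<in> vecs_over S n" "y \<in> vecs_over S n" for x y
      using subspace_over_add[OF subspace_vecs_over that] subspace_over_diff[OF subspace_vecs_over that] .
  qed (rule dot_add_left)
  also have "card ((\<lambda>w. dot n w v) ` vecs_over S n) = card S ^ rk S n v"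
    using image_dot_vecs_over[OF I(1) span] card_span_over[OF I(2)] finite_subset[OF I(1)] I(3)
    by simp
  finally have "card S ^ rk S n v * card S ^ (n - rk S n v) =
      card S ^ rk S n v * card {w \<in> vecs_over S n. dot n w v = 0}"
    using rk_le[of v] by (simp add: card_vecs_over flip: power_add)
  moreover have "card S ^ rk S n v > 0" using card_S_ge_2 by simp
  ultimately show ?thesis by (simp only: nat_mult_eq_cancel1)
qed


lemma subspace_rank_kernel: "subspace_over S vscale {w \<in> vecs_over S n. dot n w v = 0}"
  using subspace_vecs_over unfolding subspace_over_def by (auto simp: dot_add_left dot_vscale_left)

lemma card_subspaces_dim_orth_vec:
  "real (card {W \<in> subspaces_dim S vscale (vecs_over S n) t. \<forall>w\<in>W. dot n w v = 0}) =
    gauss_binom (card S) (n - rk S n v) t"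
proof -
  have "{W \<in> subspaces_dim S vscale (vecs_over S n) t. \<forall>w\<in>W. dot n w v = 0} =
      subspaces_dim S vscale {w \<in> vecs_over S n. dot n w v = 0} t"
    by (auto simp: subspaces_dim_def)
  then show ?thesis
    using card_subspaces_dim[OF subspace_rank_kernel _ card_rank_kernel] finite_subset_vecs_over by simp
qed

end

section \<open>Extension of scalars and the dual code\<close>

locale subfield_extension =
  fixes K :: "'a::{field,finite} set" and q m n :: nat
  assumes subfield_K: "is_subfield K" and card_K: "card K = q"
    and card_UNIV: "card (UNIV :: 'a set) = q ^ m"
begin

sublocale K: subfield_vectors K n
  by unfold_locales (auto simp: subfield_K)

sublocale F: subfield_vectors "UNIV :: 'a set" n
  by unfold_locales (auto simp: subfield_UNIV)

lemma q_ge_2: "q \<ge> 2"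
  using K.card_S_ge_2 card_K by simp

lemma exists_basis: "\<exists>bs. length bs = m \<and> indep_list K (*) bs \<and> span_list K (*) bs = UNIV"
proof -
  obtain bs where bs: "indep_list K (*) bs" "span_list K (*) bs = UNIV"
    using K.scalar.exists_basis_list[of UNIV] by (auto simp: subspace_over_def)
  then have "q ^ length bs = q ^ m" using K.scalar.card_span_list card_UNIV card_K by metis
  then have "length bs = m" using q_ge_2 by (simp add: power_inject_exp)
  with bs show ?thesis by blast
qed

definition basis_list :: "'a list" where
  "basis_list = (SOME bs. length bs = m \<and> indep_list K (*) bs \<and> span_list K (*) bs = UNIV)"

abbreviation basis :: "nat \<Rightarrow> 'a" where
  "basis l \<equiv> basis_list ! l"

lemma basis_list: "length basis_list = m" "indep_list K (*) basis_list" "span_list K (*) basis_list = UNIV"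
  using someI_ex[OF exists_basis] unfolding basis_list_def[symmetric] by auto

lemma basis_indep: "(\<forall>l<m. c l \<in> K) \<Longrightarrow> (\<Sum>l<m. c l * basis l) = 0 \<Longrightarrow> l < m \<Longrightarrow> c l = 0"
  using K.scalar.indep_list_coeffs_eq_0[OF basis_list(2), of c l] basis_list(1) by simp

definition coord :: "'a \<Rightarrow> nat \<Rightarrow> 'a" where
  "coord x = (SOME c. (\<forall>l<m. c l \<in> K) \<and> x = (\<Sum>l<m. c l * basis l))"

lemma coord: "\<forall>l<m. coord x l \<in> K" "x = (\<Sum>l<m. coord x l * basis l)"
proof -
  have "\<exists>c. (\<forall>l<m. c l \<in> K) \<and> x = (\<Sum>l<m. c l * basis l)"
    using K.scalar.mem_span_list_iff[of x basis_list] basis_list by simp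
  from someI_ex[OF this] show "\<forall>l<m. coord x l \<in> K" "x = (\<Sum>l<m. coord x l * basis l)"
    unfolding coord_def[symmetric] by auto
qed

lemma coord_unique:
  assumes "\<forall>l<m. c l \<in> K" "x = (\<Sum>l<m. c l * basis l)" "l < m"
  shows "coord x l = c l"
proof -
  have "(\<Sum>l<m. (coord x l - c l) * basis l) = 0"
    using coord(2)[of x] assms(2) by (simp add: algebra_simps sum_subtractf)
  moreover have "\<forall>l<m. coord x l - c l \<in> K" using coord(1) assms(1) K.sfD(7) by auto
  ultimately show ?thesis using basis_indep[of "\<lambda>l. coord x l - c l" l] assms(3) by simp
qed

definition coord_vec :: "nat \<Rightarrow> (nat \<Rightarrow> 'a) \<Rightarrow> nat \<Rightarrow> 'a" where
  "coord_vec l v = (\<lambda>i. coord (v i) l)"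

lemma coord_vec_in_vecs_over: "v \<in> vecs n \<Longrightarrow> l < m \<Longrightarrow> coord_vec l v \<in> vecs_over K n"
  using coord(1) coord_unique[of "\<lambda>_. 0" 0 l] K.sfD(1)
  by (auto simp: coord_vec_def vecs_over_def vecs_def)

lemma sum_coord_vec: "v = (\<lambda>i. \<Sum>l<m. coord_vec l v i * basis l)"
  using coord(2) by (simp add: coord_vec_def fun_eq_iff)

lemma dot_eq_sum_coord_vec: "dot n w v = (\<Sum>l<m. dot n w (coord_vec l v) * basis l)"
proof -
  have "dot n w v = (\<Sum>i<n. \<Sum>l<m. w i * coord_vec l v i * basis l)"
    unfolding dot_def by (subst sum_coord_vec) (simp add: sum_distrib_left mult.assoc)
  also have "\<dots> = (\<Sum>l<m. dot n w (coord_vec l v) * basis l)"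
    by (subst sum.swap) (simp add: dot_def sum_distrib_right)
  finally show ?thesis .
qed

lemma dot_eq_0_iff_coord_vec:
  assumes "w \<in> vecs_over K n" "v \<in> vecs n"
  shows "dot n w v = 0 \<longleftrightarrow> (\<forall>l<m. dot n w (coord_vec l v) = 0)"
  using basis_indep[of "\<lambda>l. dot n w (coord_vec l v)"] dot_eq_sum_coord_vec[of w v]
    assms coord_vec_in_vecs_over K.dot_in_subfield
  by auto

(* The F-span of a K-subspace W of K^n. Defining it through the K-orthogonal complement makes
   F-linearity evident; extend_eq_coord_vec gives the description by coordinates. *)
definition extend :: "(nat \<Rightarrow> 'a) set \<Rightarrow> (nat \<Rightarrow> 'a) set" where
  "extend W = {v \<in> vecs n. \<forall>a\<in>orth K n W. dot n a v = 0}"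

lemma extend_eq_coord_vec:
  assumes "subspace_over K vscale W" "W \<subseteq> vecs_over K n"
  shows "extend W = {v \<in> vecs n. \<forall>l<m. coord_vec l v \<in> W}"
proof -
  have "(\<forall>a\<in>orth K n W. dot n a v = 0) \<longleftrightarrow> (\<forall>l<m. coord_vec l v \<in> W)" if v: "v \<in> vecs n" for v
  proof -
    have "(\<forall>a\<in>orth K n W. dot n a v = 0) \<longleftrightarrow> (\<forall>a\<in>orth K n W. \<forall>l<m. dot n a (coord_vec l v) = 0)"
      using dot_eq_0_iff_coord_vec[OF _ v] K.orth_subset by blast
    also have "\<dots> \<longleftrightarrow> (\<forall>l<m. coord_vec l v \<in> orth K n (orth K n W))"
      using coord_vec_in_vecs_over[OF v] by (auto simp: orth_def[of K n "orth K n W"])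
    also have "\<dots> \<longleftrightarrow> (\<forall>l<m. coord_vec l v \<in> W)"
      using K.orth_orth[OF assms] by simp
    finally show ?thesis .
  qed
  then show ?thesis unfolding extend_def by auto
qed

lemma card_extend:
  assumes W: "subspace_over K vscale W" "W \<subseteq> vecs_over K n"
  shows "card (extend W) = card W ^ m"
proof -
  define comb where "comb = (\<lambda>h :: nat \<Rightarrow> nat \<Rightarrow> 'a. \<lambda>i. \<Sum>l<m. h l i * basis l)"
  have coord_vec_comb: "coord_vec l (comb h) = h l" if h: "h \<in> PiE {..<m} (\<lambda>_. W)" and "l < m" for h l
  proof -
    have "\<forall>l<m. h l i \<in> K" for i using h W(2) by (auto simp: PiE_def Pi_def vecs_over_def)
    then show ?thesis
      unfolding coord_vec_def comb_def using coord_unique[of "\<lambda>l. h l _" _ l] \<open>l < m\<close> by (simp add: fun_eq_iff)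
  qed
  have "bij_betw (\<lambda>v. restrict (\<lambda>l. coord_vec l v) {..<m}) (extend W) (PiE {..<m} (\<lambda>_. W))"
  proof (rule bij_betwI[where g = comb])
    show "comb \<in> PiE {..<m} (\<lambda>_. W) \<rightarrow> extend W"
    proof
      fix h assume h: "h \<in> PiE {..<m} (\<lambda>_. W)"
      have "h l i = 0" if "l < m" "i \<ge> n" for l i
        using h that W(2) by (auto simp: PiE_def Pi_def vecs_over_def)
      then have "comb h \<in> vecs n" by (auto simp: comb_def vecs_def)
      then show "comb h \<in> extend W"
        using coord_vec_comb[OF h] h unfolding extend_eq_coord_vec[OF W] by auto
    qed
    show "restrict (\<lambda>l. coord_vec l (comb h)) {..<m} = h" if "h \<in> PiE {..<m} (\<lambda>_. W)" for h
      using coord_vec_comb[OF that] that by (auto simp: fun_eq_iff PiE_def extensional_def)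
  qed (use sum_coord_vec in \<open>auto simp: comb_def extend_eq_coord_vec[OF W]\<close>)
  then show ?thesis by (simp add: bij_betw_same_card card_PiE)
qed

lemma subspace_extend: "subspace_over UNIV vscale (extend W)"
  unfolding subspace_over_def extend_def
  by (auto simp: dot_add_right dot_vscale_right vecs_def) (simp add: vscale_def)

lemma orth_extend:
  assumes W: "subspace_over K vscale W" "W \<subseteq> vecs_over K n"
  shows "orth UNIV n (extend W) = orth UNIV n W"
proof
  have "W \<subseteq> extend W"
    using W(2) by (auto simp: extend_def orth_def dot_commute vecs_over_def vecs_def)
  then show "orth UNIV n (extend W) \<subseteq> orth UNIV n W" by (auto simp: orth_def)
next
  have "dot n c v = 0" if c: "c \<in> orth UNIV n W" and v: "v \<in> extend W" for c v
  proof -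
    have "\<forall>l<m. coord_vec l v \<in> W" using v unfolding extend_eq_coord_vec[OF W] by auto
    then have "\<forall>l<m. dot n c (coord_vec l v) = 0" using c by (auto simp: orth_def dot_commute)
    then show ?thesis by (subst dot_eq_sum_coord_vec) simp
  qed
  then show "orth UNIV n W \<subseteq> orth UNIV n (extend W)"
    by (auto simp: orth_def dot_commute)
qed


definition count_orth :: "(nat \<Rightarrow> 'a) set \<Rightarrow> (nat \<Rightarrow> 'a) set \<Rightarrow> nat" where
  "count_orth X W = card {v\<in>X. \<forall>w\<in>W. dot n w v = 0}"

lemma card_mult_count_orth_dual_code:
  assumes C: "subspace_over UNIV vscale C" "C \<subseteq> vecs n"
    and W: "subspace_over K vscale W" "W \<subseteq> vecs_over K n"
  shows "card C * count_orth (dual_code n C) (orth K n W) = card W ^ m * count_orth C W"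
proof -
  have "card C * card (extend W \<inter> orth UNIV n C) = card (extend W) * card (C \<inter> orth UNIV n (extend W))"
    using C subspace_extend by (intro F.card_orth_inter_swap) (auto simp: vecs_over_UNIV extend_def)
  moreover have "extend W \<inter> orth UNIV n C = {v \<in> dual_code n C. \<forall>a\<in>orth K n W. dot n a v = 0}"
    by (auto simp: extend_def dual_code_eq_orth orth_def vecs_over_UNIV)
  moreover have "C \<inter> orth UNIV n (extend W) = {c\<in>C. \<forall>w\<in>W. dot n w c = 0}"
    unfolding orth_extend[OF W] using C(2) by (auto simp: orth_def vecs_over_UNIV)
  ultimately show ?thesis using card_extend[OF W] by (simp add: count_orth_def)
qed

lemma sum_count_orth_subspaces_dim:
  assumes "X \<subseteq> vecs n"
  shows "(\<Sum>W\<in>subspaces_dim K vscale (vecs_over K n) t. real (count_orth X W)) =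
    (\<Sum>j\<le>n. real (rank_dist K n X j) * gauss_binom q (n - j) t)"
proof -
  have fin_X: "finite X" using assms F.finite_subset_vecs_over by (simp add: vecs_over_UNIV)
  have fin_subspaces: "finite (subspaces_dim K vscale (vecs_over K n) t)"
    by (rule finite_subset[of _ "Pow (vecs_over K n)"]) (auto simp: subspaces_dim_def K.finite_vecs_over)
  have "(\<Sum>W\<in>subspaces_dim K vscale (vecs_over K n) t. real (count_orth X W)) =
      real (\<Sum>v\<in>X. card {W\<in>subspaces_dim K vscale (vecs_over K n) t. \<forall>w\<in>W. dot n w v = 0})"
    unfolding count_orth_def of_nat_sum[symmetric] sum_card_filter_swap[OF fin_subspaces fin_X] ..
  also have "\<dots> = (\<Sum>v\<in>X. gauss_binom q (n - rk K n v) t)"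
    unfolding of_nat_sum K.card_subspaces_dim_orth_vec card_K ..
  also have "\<dots> = (\<Sum>j\<le>n. \<Sum>v\<in>{v\<in>X. rk K n v = j}. gauss_binom q (n - rk K n v) t)"
    using K.rk_le fin_X by (intro sum.group[symmetric]) auto
  also have "\<dots> = (\<Sum>j\<le>n. real (rank_dist K n X j) * gauss_binom q (n - j) t)"
    by (simp add: rank_dist_def)
  finally show ?thesis .
qed

lemma orth_subspaces_dim:
  assumes "t \<le> n" "W \<in> subspaces_dim K vscale (vecs_over K n) t"
  shows "orth K n W \<in> subspaces_dim K vscale (vecs_over K n) (n - t)"
proof -
  have "q ^ t * card (orth K n W) = q ^ t * q ^ (n - t)"
    using K.card_orth[of W] assms card_K by (simp add: subspaces_dim_def flip: power_add)
  then have "card (orth K n W) = q ^ (n - t)" using q_ge_2 by simp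
  then show ?thesis using K.subspace_orth K.orth_subset card_K by (simp add: subspaces_dim_def)
qed

lemma bij_betw_orth_subspaces_dim:
  assumes "t \<le> n"
  shows "bij_betw (orth K n)
    (subspaces_dim K vscale (vecs_over K n) t) (subspaces_dim K vscale (vecs_over K n) (n - t))"
proof (rule bij_betwI[where g = "orth K n"])
  show "orth K n \<in> subspaces_dim K vscale (vecs_over K n) t \<rightarrow> subspaces_dim K vscale (vecs_over K n) (n - t)"
    using orth_subspaces_dim[OF assms] by blast
  show "orth K n \<in> subspaces_dim K vscale (vecs_over K n) (n - t) \<rightarrow> subspaces_dim K vscale (vecs_over K n) t"
    using orth_subspaces_dim[of "n - t"] assms by (auto simp: diff_diff_cancel)
qed (auto simp: subspaces_dim_def K.orth_orth)

lemma gauss_moments_dual_code: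
  assumes C: "subspace_over UNIV vscale C" "C \<subseteq> vecs n" and "t \<le> n"
  shows "real (card C) * (\<Sum>j\<le>n. real (rank_dist K n (dual_code n C) j) * gauss_binom q (n - j) (n - t))
       = real q ^ (t * m) * (\<Sum>i\<le>n. real (rank_dist K n C i) * gauss_binom q (n - i) t)"
proof -
  let ?Subs = "\<lambda>t. subspaces_dim K vscale (vecs_over K n) t"
  have "real (card C) * (\<Sum>W\<in>?Subs t. real (count_orth (dual_code n C) (orth K n W))) =
      (\<Sum>W\<in>?Subs t. real q ^ (t * m) * real (count_orth C W))"
    unfolding sum_distrib_left
  proof (intro sum.cong refl)
    fix W assume "W \<in> ?Subs t"
    then have W: "subspace_over K vscale W" "W \<subseteq> vecs_over K n" "card W = q ^ t"
      by (auto simp: subspaces_dim_def card_K)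
    show "real (card C) * real (count_orth (dual_code n C) (orth K n W)) =
        real q ^ (t * m) * real (count_orth C W)"
      using card_mult_count_orth_dual_code[OF C W(1,2)] W(3)
      by (simp add: power_mult flip: of_nat_mult of_nat_power)
  qed
  also have "(\<Sum>W\<in>?Subs t. real (count_orth (dual_code n C) (orth K n W))) =
      (\<Sum>W\<in>?Subs (n - t). real (count_orth (dual_code n C) W))"
    by (rule sum.reindex_bij_betw[OF bij_betw_orth_subspaces_dim[OF \<open>t \<le> n\<close>]])
  finally show ?thesis
    using sum_count_orth_subspaces_dim[OF C(2), of t]
      sum_count_orth_subspaces_dim[of "dual_code n C" "n - t"]
    by (simp add: dual_code_def sum_distrib_left[symmetric])
qed

lemma rank_dist_dual_code_eq_hcoeff:
  assumes C: "subspace_over UNIV vscale C" "C \<subseteq> vecs n" and "j \<le> n"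
  shows "real (rank_dist K n (dual_code n C) j) = 1 / real (card C) *
    hcoeff (qtransform_at q n (\<lambda>i. real (rank_dist K n C i)) (x_plus_qm1_y q) x_minus_y) j (real m)"
proof -
  let ?A = "\<lambda>i. real (rank_dist K n C i)"
  let ?T = "qtransform_at q n ?A (x_plus_qm1_y q) x_minus_y"
  have "0 \<in> C" using C(1) by (simp add: subspace_over_def)
  moreover have "finite C" using C(2) F.finite_subset_vecs_over by (simp add: vecs_over_UNIV)
  ultimately have "card C > 0" by (auto simp: card_gt_0_iff)
  have powr_m: "(real q powr real m) ^ k = real q ^ (k * m)" for k
    using q_ge_2 by (simp add: powr_realpow power_mult[symmetric] mult.commute)
  show ?thesis
  proof (rule gauss_binom_moments_unique[OF q_ge_2 _ \<open>j \<le> n\<close>])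
    fix s assume "s \<le> n"
    have "(\<Sum>j\<le>n. gauss_binom q (n - j) s * (1 / real (card C) * hcoeff ?T j (real m))) =
        1 / real (card C) * gauss_moment q s ?T (real m)"
      by (simp add: gauss_moment_def qtransform_at_def sum_distrib_left algebra_simps)
    also have "\<dots> = 1 / real (card C) *
        (real q ^ ((n - s) * m) * (\<Sum>i\<le>n. ?A i * gauss_binom q (n - i) (n - s)))"
      using gauss_moment_qtransform_at[OF q_ge_2 \<open>s \<le> n\<close>] powr_m by simp
    also have "\<dots> = (\<Sum>j\<le>n. gauss_binom q (n - j) s * real (rank_dist K n (dual_code n C) j))"
      using gauss_moments_dual_code[OF C, of "n - s"] \<open>s \<le> n\<close> \<open>card C > 0\<close>
      by (simp add: field_simps mult.commute)
    finally show "(\<Sum>j\<le>n. gauss_binom q (n - j) s * real (rank_dist K n (dual_code n C) j)) =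
        (\<Sum>j\<le>n. gauss_binom q (n - j) s * (1 / real (card C) * hcoeff ?T j (real m)))" ..
  qed
qed

end

lemma linear_code_subspace:
  assumes "linear_code n k C"
  shows "subspace_over UNIV vscale C" "C \<subseteq> vecs n"
proof -
  obtain b where b: "C = {vlincomb c b k | c. True}" using assms by (auto simp: linear_code_def)
  show "C \<subseteq> vecs n" using assms by (simp add: linear_code_def)
  have "0 = vlincomb (\<lambda>_. 0) b k" by (simp add: vlincomb_def fun_eq_iff)
  moreover have "vlincomb c b k + vlincomb d b k = vlincomb (\<lambda>j. c j + d j) b k" for c d
    by (simp add: vlincomb_def fun_eq_iff sum.distrib algebra_simps)
  moreover have "vscale a (vlincomb c b k) = vlincomb (\<lambda>j. a * c j) b k" for a c
    by (simp add: vlincomb_def vscale_def fun_eq_iff sum_distrib_left algebra_simps)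
  ultimately show "subspace_over UNIV vscale C" unfolding subspace_over_def b by blast
qed

theorem theorem2:
  fixes K :: "'a::{field,finite} set" and q m n k :: nat and C :: "(nat \<Rightarrow> 'a) set"
  assumes "is_subfield K" and "card K = q" and "m \<ge> 1" and "card (UNIV :: 'a set) = q ^ m"
    and "linear_code n k C"
  shows "\<forall>x y :: real.
    (\<Sum>j\<le>n. real (rank_dist K n (dual_code n C) j) * y ^ j * x ^ (n - j))
    = (1 / real (card C)) *
      heval (qtransform_at q n (\<lambda>i. real (rank_dist K n C i)) (x_plus_qm1_y q) x_minus_y)
            (real m) x y"
proof (intro allI)
  fix x y :: real
  interpret subfield_extension K q m n
    using assms(1,2,4) by unfold_locales
  let ?T = "qtransform_at q n (\<lambda>i. real (rank_dist K n C i)) (x_plus_qm1_y q) x_minus_y"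
  have "(\<Sum>j\<le>n. real (rank_dist K n (dual_code n C) j) * y ^ j * x ^ (n - j)) =
      (\<Sum>j\<le>n. 1 / real (card C) * hcoeff ?T j (real m) * y ^ j * x ^ (n - j))"
    using rank_dist_dual_code_eq_hcoeff[OF linear_code_subspace[OF assms(5)]] by simp
  also have "\<dots> = 1 / real (card C) * heval ?T (real m) x y"
    by (simp add: heval_def qtransform_at_def sum_distrib_left mult.assoc)
  finally show "(\<Sum>j\<le>n. real (rank_dist K n (dual_code n C) j) * y ^ j * x ^ (n - j)) =
      1 / real (card C) * heval ?T (real m) x y" .
qed

end
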